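(* Let $\mathcal{X}$ be a finite-dimensional complex vector space and $L=\bigoplus_{k\in\mathbb{Z}_n}L_k$ a $\mathbb{Z}_n$-graded Lie algebra of operators on $\mathcal{X}$. If $L_0$ consists of scalar operators (multiples of the identity), then $L$ is solvable, and hence triangularizable.
   Context: A Lie algebra of operators is a linear subspace closed under $[a,b]=ab-ba$. $L$ is $\mathbb{Z}_n$-graded if $L$ is the direct sum of subspaces $L_k$, $k\in\mathbb{Z}_n$, with $[L_j,L_k]\subseteq L_{j+k}$ (indices mod $n$). Triangularizable means there is a maximal chain of subspaces invariant under all operators of $L$ (equivalently, a basis in which all are upper triangular). *)

theory Defs
  imports "HOL-Analysis.Analysis"
begin

text \<open>Operators on a d-dimensional complex space X are represented (after fixing a basis)
  as square complex matrices indexed by a finite type 'd; the order on 'd fixes the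
  ordering of the basis used for upper triangularity.\<close>

type_synonym 'd cmat = "((complex, 'd) vec, 'd) vec"

definition cscale :: "complex \<Rightarrow> 'd::finite cmat \<Rightarrow> 'd cmat" where
  "cscale c A = (\<chi> i j. c * A$i$j)"

definition lie_bracket :: "'d::finite cmat \<Rightarrow> 'd cmat \<Rightarrow> 'd cmat" where
  "lie_bracket A B = A ** B - B ** A"

definition csubspace :: "'d::finite cmat set \<Rightarrow> bool" where
  "csubspace S \<longleftrightarrow> 0 \<in> S \<and> (\<forall>A\<in>S. \<forall>B\<in>S. A + B \<in> S) \<and> (\<forall>c. \<forall>A\<in>S. cscale c A \<in> S)"

definition cspan :: "'d::finite cmat set \<Rightarrow> 'd cmat set" where
  "cspan X = \<Inter>{S. csubspace S \<and> X \<subseteq> S}"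

definition lie_algebra :: "'d::finite cmat set \<Rightarrow> bool" where
  "lie_algebra L \<longleftrightarrow> csubspace L \<and> (\<forall>A\<in>L. \<forall>B\<in>L. lie_bracket A B \<in> L)"

definition derived :: "'d::finite cmat set \<Rightarrow> 'd cmat set" where
  "derived L = cspan {lie_bracket A B | A B. A \<in> L \<and> B \<in> L}"

definition solvable :: "'d::finite cmat set \<Rightarrow> bool" where
  "solvable L \<longleftrightarrow> (\<exists>k. (derived ^^ k) L = {0})"

definition upper_triangular :: "'d::{finite,linorder} cmat \<Rightarrow> bool" where
  "upper_triangular M \<longleftrightarrow> (\<forall>i j. j < i \<longrightarrow> M$i$j = 0)"

definition triangularizable :: "'d::{finite,linorder} cmat set \<Rightarrow> bool" where
  "triangularizable L \<longleftrightarrow> (\<exists>P::'d cmat. invertible P \<and> (\<forall>A\<in>L. upper_triangular (matrix_inv P ** A ** P)))"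

definition Zn_graded :: "nat \<Rightarrow> (nat \<Rightarrow> 'd::finite cmat set) \<Rightarrow> 'd cmat set \<Rightarrow> bool" where
  "Zn_graded n Lk L \<longleftrightarrow>
     (\<forall>k<n. csubspace (Lk k)) \<and>
     L = {(\<Sum>k<n. x k) | x. \<forall>k<n. x k \<in> Lk k} \<and>
     (\<forall>x. (\<forall>k<n. x k \<in> Lk k) \<and> (\<Sum>k<n. x k) = 0 \<longrightarrow> (\<forall>k<n. x k = 0)) \<and>
     (\<forall>j<n. \<forall>k<n. \<forall>A\<in>Lk j. \<forall>B\<in>Lk k. lie_bracket A B \<in> Lk ((j + k) mod n))"

end

theory Submission
  imports Defs "HOL-Computational_Algebra.Fundamental_Theorem_Algebra"
begin

text \<open>
  Solvability follows Kreknin's argument.  For a graded subalgebra \<open>M\<close> let \<open>filt k M\<close> be the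
  subalgebra generated by the homogeneous components of \<open>M\<close> of degree \<open>0\<close> or above \<open>k\<close>.  A bracket
  lemma, proved by downward induction on degrees with the Jacobi identity, gives
  \<open>[filt k M \<inter> L\<^sub>a, filt k M \<inter> L\<^sub>b] \<subseteq> filt (k + 1) M\<close> whenever \<open>a + b \<equiv> k + 1\<close>; from it the
  \<open>(2^k - 1)\<close>-th derived algebra of \<open>M\<close> lies in \<open>filt k M\<close>.  Since \<open>filt (n - 1) L\<close> is generated
  by scalars, the \<open>2^(n-1)\<close>-th derived algebra of \<open>L\<close> vanishes.

  Triangularizability is Lie's theorem over \<open>\<complex>\<close>, proved from scratch: eigenvectors modulo an
  invariant subspace come from the fundamental theorem of algebra applied to a Krylov relation;
  Lie's lemma (weight spaces of an ideal are invariant) uses a trace on a quotient, which vanishes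
  on commutators; induction on the derived length yields common eigenvectors modulo invariant
  subspaces, hence a complete invariant flag and an upper triangular basis.
\<close>

lemma matrix_mult_diff_left: "(A::'a::comm_ring_1^'n::finite^'m) ** (B - C) = A ** B - A ** C"
  by (simp add: vec_eq_iff matrix_matrix_mult_def sum_subtractf algebra_simps)

lemma matrix_mult_diff_right: "((B::'a::comm_ring_1^'n::finite^'m) - C) ** (A::'a^'k^'n) = B ** A - C ** A"
  by (simp add: vec_eq_iff matrix_matrix_mult_def sum_subtractf algebra_simps)

lemma matrix_mult_add_right: "((B::'a::comm_ring_1^'n::finite^'m) + C) ** (A::'a^'k^'n) = B ** A + C ** A"
  by (simp add: vec_eq_iff matrix_matrix_mult_def sum.distrib algebra_simps)

lemma cscale_mult_left: "cscale c A ** B = cscale c (A ** B)"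
  by (simp add: cscale_def vec_eq_iff matrix_matrix_mult_def sum_distrib_left algebra_simps)

lemma cscale_mult_right: "A ** cscale c B = cscale c (A ** B)"
  by (simp add: cscale_def vec_eq_iff matrix_matrix_mult_def sum_distrib_left algebra_simps)

lemma cscale_add: "cscale c (A + B) = cscale c A + cscale c B"
  by (simp add: cscale_def vec_eq_iff algebra_simps)

lemma cscale_diff: "cscale c (A - B) = cscale c A - cscale c B"
  by (simp add: cscale_def vec_eq_iff algebra_simps)

lemma cscale_zero [simp]: "cscale c 0 = 0"
  by (simp add: cscale_def vec_eq_iff)

lemma cscale_minus_one: "cscale (-1) A = - A"
  by (simp add: cscale_def vec_eq_iff)

lemma cscale_sum: "cscale c (sum f I) = (\<Sum>i\<in>I. cscale c (f i))"
  by (induction I rule: infinite_finite_induct) (auto simp: cscale_add)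

lemma cscale_mat: "cscale c (mat a) = mat (c * a)"
  by (simp add: vec_eq_iff mat_def cscale_def)

lemma mat_add: "mat a + mat b = (mat (a + b) :: 'a::semiring_1^'n^'n)"
  by (simp add: vec_eq_iff mat_def)

lemma lie_bracket_add_left: "lie_bracket (A + B) C = lie_bracket A C + lie_bracket B C"
  unfolding lie_bracket_def by (simp add: matrix_add_ldistrib matrix_mult_add_right)

lemma lie_bracket_add_right: "lie_bracket C (A + B) = lie_bracket C A + lie_bracket C B"
  unfolding lie_bracket_def by (simp add: matrix_add_ldistrib matrix_mult_add_right)

lemma lie_bracket_scale_left: "lie_bracket (cscale c A) B = cscale c (lie_bracket A B)"
  unfolding lie_bracket_def by (simp add: cscale_mult_left cscale_mult_right cscale_diff)

lemma lie_bracket_scale_right: "lie_bracket A (cscale c B) = cscale c (lie_bracket A B)"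
  unfolding lie_bracket_def by (simp add: cscale_mult_left cscale_mult_right cscale_diff)

lemma lie_bracket_zero_left [simp]: "lie_bracket 0 A = 0"
  unfolding lie_bracket_def by simp

lemma lie_bracket_zero_right [simp]: "lie_bracket A 0 = 0"
  unfolding lie_bracket_def by simp

lemma lie_bracket_antisym: "lie_bracket A B = - lie_bracket B A"
  unfolding lie_bracket_def by simp

lemma jacobi:
  "lie_bracket (lie_bracket A B) C = lie_bracket A (lie_bracket B C) - lie_bracket B (lie_bracket A C)"
  unfolding lie_bracket_def by (simp add: matrix_mult_diff_left matrix_mult_diff_right matrix_mul_assoc)

lemma mat_commute: "mat c ** (B::'a::comm_ring_1^'n::finite^'n) = B ** mat c"
proof -
  have "(\<Sum>k\<in>UNIV. (if i = k then c else 0) * B$k$j) = (\<Sum>k\<in>UNIV. B$i$k * (if k = j then c else 0))"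
    for i j
    by (simp add: if_distrib[of "\<lambda>x. x * _"] if_distrib[of "\<lambda>x. _ * x"] mult.commute cong: if_cong)
  then show ?thesis by (simp add: vec_eq_iff matrix_matrix_mult_def mat_def)
qed

lemma lie_bracket_mat_left [simp]: "lie_bracket (mat c) B = 0"
  unfolding lie_bracket_def by (simp add: mat_commute)

lemma lie_bracket_mat_right [simp]: "lie_bracket B (mat c) = 0"
  unfolding lie_bracket_def by (simp add: mat_commute)


section \<open>Subspaces, spans and the derived algebra\<close>

lemma csubspace_0: "csubspace S \<Longrightarrow> 0 \<in> S"
  by (simp add: csubspace_def)

lemma csubspace_add: "csubspace S \<Longrightarrow> a \<in> S \<Longrightarrow> b \<in> S \<Longrightarrow> a + b \<in> S"
  by (simp add: csubspace_def)

lemma csubspace_scale: "csubspace S \<Longrightarrow> a \<in> S \<Longrightarrow> cscale c a \<in> S"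
  by (simp add: csubspace_def)

lemma csubspace_neg: "csubspace S \<Longrightarrow> a \<in> S \<Longrightarrow> - a \<in> S"
  using csubspace_scale[of S a "-1"] by (simp add: cscale_minus_one)

lemma csubspace_diff: "csubspace S \<Longrightarrow> a \<in> S \<Longrightarrow> b \<in> S \<Longrightarrow> a - b \<in> S"
  using csubspace_add[of S a "-b"] csubspace_neg[of S b] by simp

lemma csubspace_sum:
  assumes "csubspace S" "finite I" "\<And>i. i \<in> I \<Longrightarrow> f i \<in> S"
  shows "sum f I \<in> S"
  using assms(2,3) by (induction I rule: finite_induct) (auto simp: csubspace_0 csubspace_add assms(1))

lemma csubspace_cspan: "csubspace (cspan X)"
  unfolding cspan_def csubspace_def by auto

lemma cspan_superset: "X \<subseteq> cspan X"
  unfolding cspan_def by auto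

lemma cspan_base: "x \<in> X \<Longrightarrow> x \<in> cspan X"
  using cspan_superset by blast

lemma cspan_zero: "0 \<in> cspan X"
  by (rule csubspace_0[OF csubspace_cspan])

lemma cspan_least: "csubspace S \<Longrightarrow> X \<subseteq> S \<Longrightarrow> cspan X \<subseteq> S"
  unfolding cspan_def by auto

lemma cspan_mono: "X \<subseteq> Y \<Longrightarrow> cspan X \<subseteq> cspan Y"
  by (meson cspan_least csubspace_cspan cspan_superset order_trans)

lemma lie_bracket_cspan:
  assumes T: "csubspace T" and gen: "\<And>x y. x \<in> X \<Longrightarrow> y \<in> Y \<Longrightarrow> lie_bracket x y \<in> T"
    and x: "x \<in> cspan X" and y: "y \<in> cspan Y"
  shows "lie_bracket x y \<in> T"
proof -
  have "csubspace {x. \<forall>y\<in>Y. lie_bracket x y \<in> T}"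
    using T by (auto simp: csubspace_def lie_bracket_add_left lie_bracket_scale_left)
  then have left: "cspan X \<subseteq> {x. \<forall>y\<in>Y. lie_bracket x y \<in> T}"
    using gen cspan_least by blast
  have "csubspace {y. \<forall>x\<in>cspan X. lie_bracket x y \<in> T}"
    using T by (auto simp: csubspace_def lie_bracket_add_right lie_bracket_scale_right)
  then have "cspan Y \<subseteq> {y. \<forall>x\<in>cspan X. lie_bracket x y \<in> T}"
    using left cspan_least[of _ Y] by blast
  then show ?thesis using x y by auto
qed

lemma bracket_in_derived: "A \<in> S \<Longrightarrow> B \<in> S \<Longrightarrow> lie_bracket A B \<in> derived S"
  unfolding derived_def by (rule cspan_base) blast

lemma csubspace_derived: "csubspace (derived S)"
  unfolding derived_def by (rule csubspace_cspan)

lemma zero_in_derived: "0 \<in> derived S"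
  unfolding derived_def by (rule csubspace_0[OF csubspace_cspan])

lemma derived_subset: "lie_algebra S \<Longrightarrow> derived S \<subseteq> S"
  unfolding derived_def lie_algebra_def by (intro cspan_least) blast+

lemma lie_algebra_derived: "lie_algebra S \<Longrightarrow> lie_algebra (derived S)"
  using derived_subset[of S] unfolding lie_algebra_def[of "derived S"]
  by (auto simp: derived_def csubspace_cspan intro: bracket_in_derived[unfolded derived_def])

definition scalars :: "'d::finite cmat set" where
  "scalars = range mat"

lemma csubspace_scalars: "csubspace scalars"
  unfolding csubspace_def scalars_def
  by (auto simp: mat_add cscale_mat) (metis mat_0 rangeI)

lemma scalars_closed: "\<forall>x\<in>scalars. \<forall>y\<in>scalars. lie_bracket x y \<in> scalars"
  unfolding scalars_def by (auto simp: image_iff) (metis mat_0)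

lemma derived_scalars: "X \<subseteq> scalars \<Longrightarrow> derived X = {0}"
proof -
  assume X: "X \<subseteq> scalars"
  have "{lie_bracket A B | A B. A \<in> X \<and> B \<in> X} \<subseteq> {0}" using X unfolding scalars_def by auto
  moreover have "csubspace ({0} :: 'a cmat set)" by (simp add: csubspace_def)
  ultimately have "derived X \<subseteq> {0}" unfolding derived_def by (rule cspan_least[rotated])
  then show ?thesis using zero_in_derived by blast
qed


section \<open>The Lie subalgebra generated by a set\<close>

text \<open>Left-normed brackets \<open>[\<dots>[[y\<^sub>1, y\<^sub>2], y\<^sub>3] \<dots>, y\<^sub>r]\<close> of generators; their span is the
  generated Lie subalgebra.  This explicit description lets us control the degrees of its
  elements in the graded setting.\<close>

inductive_set lie_words :: "'d::finite cmat set \<Rightarrow> 'd cmat set" for Y where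
  word_gen: "y \<in> Y \<Longrightarrow> y \<in> lie_words Y"
| word_step: "w \<in> lie_words Y \<Longrightarrow> y \<in> Y \<Longrightarrow> lie_bracket w y \<in> lie_words Y"

definition lie_gen :: "'d::finite cmat set \<Rightarrow> 'd cmat set" where
  "lie_gen Y = cspan (lie_words Y)"

lemma csubspace_lie_gen: "csubspace (lie_gen Y)"
  unfolding lie_gen_def by (rule csubspace_cspan)

lemma lie_words_lie_gen: "lie_words Y \<subseteq> lie_gen Y"
  unfolding lie_gen_def by (rule cspan_superset)

lemma lie_gen_superset: "Y \<subseteq> lie_gen Y"
  using lie_words_lie_gen word_gen by blast

lemma lie_gen_bracket_gen:
  assumes "x \<in> lie_gen Y" "y \<in> Y" shows "lie_bracket x y \<in> lie_gen Y"
proof (rule lie_bracket_cspan[of _ "lie_words Y" Y])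
  show "lie_bracket w z \<in> lie_gen Y" if "w \<in> lie_words Y" "z \<in> Y" for w z
    using word_step[OF that] lie_words_lie_gen by blast
qed (use assms csubspace_lie_gen cspan_base in \<open>auto simp: lie_gen_def\<close>)

text \<open>Bracketing with a word reduces, by the Jacobi identity, to bracketing with generators.\<close>

lemma lie_gen_bracket_word:
  assumes "w \<in> lie_words Y" shows "\<forall>x\<in>lie_gen Y. lie_bracket x w \<in> lie_gen Y"
  using assms
proof (induction w rule: lie_words.induct)
  case (word_gen y) then show ?case using lie_gen_bracket_gen by blast
next
  case (word_step w y)
  show ?case
  proof
    fix x assume x: "x \<in> lie_gen Y"
    have e: "lie_bracket x (lie_bracket w y) = lie_bracket (lie_bracket x w) y - lie_bracket (lie_bracket x y) w"
      using jacobi[of x w y] lie_bracket_antisym[of w "lie_bracket x y"] by (simp add: algebra_simps)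
    have "lie_bracket (lie_bracket x w) y \<in> lie_gen Y"
      using word_step x lie_gen_bracket_gen by blast
    moreover have "lie_bracket (lie_bracket x y) w \<in> lie_gen Y"
      using word_step x lie_gen_bracket_gen by blast
    ultimately show "lie_bracket x (lie_bracket w y) \<in> lie_gen Y"
      unfolding e by (rule csubspace_diff[OF csubspace_lie_gen])
  qed
qed

lemma lie_gen_closed:
  assumes "x \<in> lie_gen Y" "y \<in> lie_gen Y" shows "lie_bracket x y \<in> lie_gen Y"
proof (rule lie_bracket_cspan[of _ "lie_words Y" "lie_words Y"])
  show "lie_bracket w z \<in> lie_gen Y" if "w \<in> lie_words Y" "z \<in> lie_words Y" for w z
    using lie_gen_bracket_word[OF that(2)] that(1) lie_words_lie_gen by blast
qed (use assms csubspace_lie_gen in \<open>auto simp: lie_gen_def\<close>)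

lemma lie_gen_least:
  assumes "csubspace T" "\<forall>x\<in>T. \<forall>y\<in>T. lie_bracket x y \<in> T" "Y \<subseteq> T"
  shows "lie_gen Y \<subseteq> T"
proof -
  have "lie_words Y \<subseteq> T"
  proof
    fix w assume "w \<in> lie_words Y" then show "w \<in> T"
      by (induction w rule: lie_words.induct) (use assms in blast)+
  qed
  then show ?thesis unfolding lie_gen_def using assms(1) by (rule cspan_least[rotated])
qed


section \<open>Graded Lie algebras with scalar zero component\<close>

locale scalar_graded =
  fixes n :: nat and Lk :: "nat \<Rightarrow> 'd::finite cmat set"
  assumes n_pos: "n \<ge> 1"
    and subspace: "\<And>k. k < n \<Longrightarrow> csubspace (Lk k)"
    and direct: "\<And>x k. (\<forall>k<n. x k \<in> Lk k) \<Longrightarrow> (\<Sum>k<n. x k) = 0 \<Longrightarrow> k < n \<Longrightarrow> x k = 0"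
    and bracket: "\<And>j k A B. j < n \<Longrightarrow> k < n \<Longrightarrow> A \<in> Lk j \<Longrightarrow> B \<in> Lk k \<Longrightarrow>
                    lie_bracket A B \<in> Lk ((j + k) mod n)"
    and scalar: "\<And>A. A \<in> Lk 0 \<Longrightarrow> \<exists>c. A = mat c"
begin

lemma bracket_deg0_left: "A \<in> Lk 0 \<Longrightarrow> lie_bracket A B = 0"
  using scalar by force

lemma bracket_deg0_right: "B \<in> Lk 0 \<Longrightarrow> lie_bracket A B = 0"
  using scalar by force

lemma deg_mod_less: "(j + k) mod n < n"
  using n_pos by simp

lemma component_unique:
  assumes "\<forall>t<n. z t \<in> Lk t" "(\<Sum>t<n. z t) = x" "x \<in> Lk a" "a < n"
  shows "z a = x"
proof -
  define z' where "z' t = z t - (if t = a then x else 0)" for t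
  have "z' t \<in> Lk t" if t: "t < n" for t
  proof (cases "t = a")
    case True then show ?thesis using csubspace_diff[OF subspace[OF t]] assms t by (simp add: z'_def)
  next
    case False then show ?thesis using assms t by (simp add: z'_def)
  qed
  moreover have "(\<Sum>t<n. z' t) = 0"
    unfolding z'_def sum_subtractf using assms by simp
  ultimately show ?thesis using direct[of z' a] assms(4) by (simp add: z'_def)
qed

lemma homogeneous_unique:
  assumes "x \<in> Lk a" "x \<in> Lk b" "a < n" "b < n" "a \<noteq> b"
  shows "x = 0"
proof -
  define z where "z t = (if t = b then x else 0)" for t
  have "\<forall>t<n. z t \<in> Lk t" using assms csubspace_0[OF subspace] by (simp add: z_def)
  moreover have "(\<Sum>t<n. z t) = x" using assms by (simp add: z_def)
  ultimately have "z a = x" using component_unique assms by blast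
  then show ?thesis using assms by (simp add: z_def)
qed

definition homog :: "'d cmat set" where
  "homog = (\<Union>t\<in>{..<n}. Lk t)"

lemma homog_bracket:
  assumes "x \<in> homog" "y \<in> homog" shows "lie_bracket x y \<in> homog"
proof -
  obtain j k where "j < n" "k < n" "x \<in> Lk j" "y \<in> Lk k" using assms unfolding homog_def by auto
  then have "lie_bracket x y \<in> Lk ((j + k) mod n)" by (rule bracket)
  then show ?thesis unfolding homog_def using deg_mod_less by blast
qed

lemma lie_words_homog:
  assumes "Y \<subseteq> homog" shows "lie_words Y \<subseteq> homog"
proof
  fix w assume "w \<in> lie_words Y" then show "w \<in> homog"
    by (induction w rule: lie_words.induct) (use assms homog_bracket in blast)+
qed

lemma cspan_component: "t < n \<Longrightarrow> cspan (S \<inter> Lk t) \<subseteq> Lk t"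
  by (rule cspan_least) (auto simp: subspace)

lemma cspan_homog_decomp:
  assumes "S \<subseteq> homog" "x \<in> cspan S"
  shows "\<exists>z. (\<forall>t<n. z t \<in> cspan (S \<inter> Lk t)) \<and> x = (\<Sum>t<n. z t)"
proof -
  define P where "P = {x. \<exists>z. (\<forall>t<n. z t \<in> cspan (S \<inter> Lk t)) \<and> x = (\<Sum>t<n. z t)}"
  note sp = csubspace_cspan
  have "csubspace P"
    unfolding csubspace_def
  proof (intro conjI ballI allI)
    show "0 \<in> P" unfolding P_def
      by (rule CollectI, rule exI[of _ "\<lambda>t. 0"]) (simp add: csubspace_0[OF sp])
  next
    fix A B assume "A \<in> P" "B \<in> P"
    then obtain z z' where "\<forall>t<n. z t \<in> cspan (S \<inter> Lk t)" "A = (\<Sum>t<n. z t)"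
       "\<forall>t<n. z' t \<in> cspan (S \<inter> Lk t)" "B = (\<Sum>t<n. z' t)" unfolding P_def by blast
    then show "A + B \<in> P" unfolding P_def
      by (intro CollectI exI[of _ "\<lambda>t. z t + z' t"]) (simp add: sum.distrib csubspace_add[OF sp])
  next
    fix c A assume "A \<in> P"
    then obtain z where "\<forall>t<n. z t \<in> cspan (S \<inter> Lk t)" "A = (\<Sum>t<n. z t)" unfolding P_def by blast
    then show "cscale c A \<in> P" unfolding P_def
      by (intro CollectI exI[of _ "\<lambda>t. cscale c (z t)"]) (simp add: cscale_sum csubspace_scale[OF sp])
  qed
  moreover have "S \<subseteq> P"
  proof
    fix s assume s: "s \<in> S"
    then obtain a where a: "a < n" "s \<in> Lk a" using assms(1) unfolding homog_def by auto
    then show "s \<in> P" unfolding P_def using s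
      by (intro CollectI exI[of _ "\<lambda>t. if t = a then s else 0"])
         (auto simp: csubspace_0[OF sp] cspan_base)
  qed
  ultimately have "cspan S \<subseteq> P" by (rule cspan_least)
  then show ?thesis using assms(2) unfolding P_def by blast
qed

lemma cspan_homog_component:
  assumes "S \<subseteq> homog" "x \<in> cspan S" "x \<in> Lk a" "a < n"
  shows "x \<in> cspan (S \<inter> Lk a)"
proof -
  obtain z where z: "\<forall>t<n. z t \<in> cspan (S \<inter> Lk t)" "x = (\<Sum>t<n. z t)"
    using cspan_homog_decomp[OF assms(1,2)] by blast
  have "\<forall>t<n. z t \<in> Lk t" using z(1) cspan_component by blast
  then have "z a = x" using component_unique[of z x a] z assms by simp
  then show ?thesis using z(1) assms(4) by metis
qed

definition graded_subalg :: "'d cmat set \<Rightarrow> bool" where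
  "graded_subalg M \<longleftrightarrow> lie_algebra M \<and>
     (\<forall>x\<in>M. \<exists>z. (\<forall>t<n. z t \<in> M \<inter> Lk t) \<and> x = (\<Sum>t<n. z t))"

lemma graded_subalg_lie_algebra: "graded_subalg M \<Longrightarrow> lie_algebra M"
  unfolding graded_subalg_def by blast

lemma graded_subalg_closed: "graded_subalg M \<Longrightarrow> x \<in> M \<Longrightarrow> y \<in> M \<Longrightarrow> lie_bracket x y \<in> M"
  unfolding graded_subalg_def lie_algebra_def by blast

definition homog_brackets :: "'d cmat set \<Rightarrow> 'd cmat set" where
  "homog_brackets M = {lie_bracket a b | a b i j. i < n \<and> j < n \<and> a \<in> M \<inter> Lk i \<and> b \<in> M \<inter> Lk j}"

lemma homog_brackets_homog: "homog_brackets M \<subseteq> homog"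
  unfolding homog_brackets_def using homog_bracket unfolding homog_def by blast

lemma derived_homog_brackets:
  assumes "graded_subalg M" shows "derived M = cspan (homog_brackets M)"
proof
  have "homog_brackets M \<subseteq> derived M"
    unfolding homog_brackets_def by (auto intro: bracket_in_derived)
  then show "cspan (homog_brackets M) \<subseteq> derived M"
    by (rule cspan_least[OF csubspace_derived])
next
  define X where "X = (\<Union>t\<in>{..<n}. M \<inter> Lk t)"
  have MX: "M \<subseteq> cspan X"
  proof
    fix x assume "x \<in> M"
    then obtain z where z: "\<forall>t<n. z t \<in> M \<inter> Lk t" "x = (\<Sum>t<n. z t)"
      using assms unfolding graded_subalg_def by blast
    have "\<forall>t<n. z t \<in> cspan X"
      using z(1) unfolding X_def by (auto intro: cspan_base)
    then show "x \<in> cspan X" unfolding z(2) by (intro csubspace_sum[OF csubspace_cspan]) auto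
  qed
  have "lie_bracket x y \<in> homog_brackets M" if "x \<in> X" "y \<in> X" for x y
    using that unfolding X_def homog_brackets_def by blast
  then have "lie_bracket A B \<in> cspan (homog_brackets M)" if "A \<in> M" "B \<in> M" for A B
    using lie_bracket_cspan[OF csubspace_cspan _ subsetD[OF MX that(1)] subsetD[OF MX that(2)]]
      cspan_base by blast
  then show "derived M \<subseteq> cspan (homog_brackets M)"
    unfolding derived_def by (intro cspan_least[OF csubspace_cspan]) blast
qed
lemma graded_subalg_derived:
  assumes M: "graded_subalg M" shows "graded_subalg (derived M)"
proof -
  have "\<exists>z. (\<forall>t<n. z t \<in> derived M \<inter> Lk t) \<and> x = (\<Sum>t<n. z t)" if x: "x \<in> derived M" for x
  proof -
    have "x \<in> cspan (homog_brackets M)" using x derived_homog_brackets[OF M] by simp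
    then obtain z where z: "\<forall>t<n. z t \<in> cspan (homog_brackets M \<inter> Lk t)" "x = (\<Sum>t<n. z t)"
      using cspan_homog_decomp[OF homog_brackets_homog] by blast
    have "cspan (homog_brackets M \<inter> Lk t) \<subseteq> derived M" for t
      using derived_homog_brackets[OF M] cspan_mono[of "homog_brackets M \<inter> Lk t"] by auto
    then have "\<forall>t<n. z t \<in> derived M \<inter> Lk t" using z(1) cspan_component by blast
    then show ?thesis using z(2) by blast
  qed
  moreover have "lie_algebra (derived M)"
    using lie_algebra_derived[OF graded_subalg_lie_algebra[OF M]] .
  ultimately show ?thesis unfolding graded_subalg_def by blast
qed
lemma graded_subalg_derived_iter: "graded_subalg M \<Longrightarrow> graded_subalg ((derived ^^ j) M)"
  by (induction j) (auto simp: graded_subalg_derived)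


end


section \<open>Kreknin's filtration\<close>

lemma degrees_high:
  fixes a b k n :: nat
  assumes "a < n" "b < n" "(a + b) mod n = Suc k" "a \<noteq> 0" "b \<noteq> 0" "\<not> (a \<le> k \<and> b \<le> k)"
  shows "Suc k < a \<and> Suc k < b"
proof (cases "a + b < n")
  case True then show ?thesis using assms by simp
next
  case False
  then have "(a + b) mod n = a + b - n" using assms(1,2) by (simp add: le_mod_geq)
  then show ?thesis using assms by linarith
qed

lemma degrees_low:
  fixes a b k n :: nat
  assumes "a \<le> k" "b \<le> k" "Suc k < n" "(a + b) mod n = Suc k"
  shows "a + b = Suc k"
proof (cases "a + b < n")
  case True then show ?thesis using assms by simp
next
  case False
  then have "(a + b) mod n = a + b - n" using assms by (simp add: le_mod_geq)
  then show ?thesis using assms False by linarith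
qed

lemma degree_wraps:
  fixes a k s t n :: nat
  assumes "a \<le> k" "k < t" "t < n" "s < n" "(s + t) mod n = a"
  shows "s = a + n - t"
proof -
  have "n \<le> s + t"
  proof (rule ccontr)
    assume "\<not> n \<le> s + t" then show False using assms by simp
  qed
  then have "(s + t) mod n = s + t - n" using assms by (simp add: le_mod_geq)
  then show ?thesis using assms \<open>n \<le> s + t\<close> by linarith
qed

lemma csubspace_bracket_preimage: "csubspace T \<Longrightarrow> csubspace {x. lie_bracket x v \<in> T}"
  unfolding csubspace_def by (auto simp: lie_bracket_add_left lie_bracket_scale_left)

context scalar_graded
begin

definition filt_gens :: "nat \<Rightarrow> 'd cmat set \<Rightarrow> 'd cmat set" where
  "filt_gens k M = (\<Union>t\<in>{t. t < n \<and> (t = 0 \<or> k < t)}. M \<inter> Lk t)"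

definition filt :: "nat \<Rightarrow> 'd cmat set \<Rightarrow> 'd cmat set" where
  "filt k M = lie_gen (filt_gens k M)"

lemma filt_gens_homog: "filt_gens k M \<subseteq> homog"
  unfolding filt_gens_def homog_def by blast

lemma csubspace_filt: "csubspace (filt k M)"
  unfolding filt_def by (rule csubspace_lie_gen)

lemma filt_closed: "x \<in> filt k M \<Longrightarrow> y \<in> filt k M \<Longrightarrow> lie_bracket x y \<in> filt k M"
  unfolding filt_def by (rule lie_gen_closed)

lemma filt_subset: "graded_subalg M \<Longrightarrow> filt k M \<subseteq> M"
  unfolding filt_def graded_subalg_def lie_algebra_def
  by (intro lie_gen_least) (auto simp: filt_gens_def)

lemma component_in_filt: "t < n \<Longrightarrow> t = 0 \<or> k < t \<Longrightarrow> M \<inter> Lk t \<subseteq> filt k M"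
  unfolding filt_def using lie_gen_superset[of "filt_gens k M"] unfolding filt_gens_def by blast

definition low_brackets :: "nat \<Rightarrow> 'd cmat set \<Rightarrow> nat \<Rightarrow> 'd cmat set" where
  "low_brackets k M a = {lie_bracket w y | w y s t. s < n \<and> k < t \<and> t < n \<and> (s + t) mod n = a \<and>
      w \<in> filt k M \<inter> Lk s \<and> y \<in> M \<inter> Lk t}"

lemma low_word_span:
  assumes a: "1 \<le> a" "a \<le> k" "a < n" and x: "x \<in> lie_words (filt_gens k M)" "x \<in> Lk a"
  shows "x \<in> cspan (low_brackets k M a)"
  using x(1)
proof (cases rule: lie_words.cases)
  case word_gen
  then obtain t where t: "t < n" "t = 0 \<or> k < t" "x \<in> Lk t" unfolding filt_gens_def by blast
  then have "x = 0" using homogeneous_unique[OF x(2) t(3) a(3) t(1)] a by auto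
  then show ?thesis using cspan_zero by simp
next
  case (word_step w y)
  then obtain t where t: "t < n" "t = 0 \<or> k < t" "y \<in> M \<inter> Lk t" unfolding filt_gens_def by blast
  obtain s where s: "s < n" "w \<in> Lk s"
    using word_step(2) lie_words_homog[OF filt_gens_homog] unfolding homog_def by blast
  have wF: "w \<in> filt k M" using word_step(2) lie_words_lie_gen unfolding filt_def by blast
  have deg: "x \<in> Lk ((s + t) mod n)" using bracket[OF s(1) t(1) s(2)] t(3) word_step(1) by blast
  consider "t = 0" | "k < t" "(s + t) mod n = a" | "(s + t) mod n \<noteq> a" using t(2) by blast
  then show ?thesis
  proof cases
    case 1
    then have "x = 0" using word_step(1) bracket_deg0_right t(3) by simp
    then show ?thesis using cspan_zero by simp
  next
    case 2
    then show ?thesis unfolding low_brackets_def using word_step(1) s t wF by (intro cspan_base) blast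
  next
    case 3
    then have "x = 0" using homogeneous_unique[OF deg x(2) deg_mod_less a(3)] by simp
    then show ?thesis using cspan_zero by simp
  qed
qed

lemma low_component_span:
  assumes a: "1 \<le> a" "a \<le> k" "k < n" and u: "u \<in> filt k M" "u \<in> Lk a"
  shows "u \<in> cspan (low_brackets k M a)"
proof -
  have an: "a < n" using a by simp
  have "u \<in> cspan (lie_words (filt_gens k M) \<inter> Lk a)"
    using cspan_homog_component[OF lie_words_homog[OF filt_gens_homog] _ u(2) an] u(1)
    unfolding filt_def lie_gen_def by blast
  moreover have "lie_words (filt_gens k M) \<inter> Lk a \<subseteq> cspan (low_brackets k M a)"
    using low_word_span[OF a(1,2) an] by blast
  then have "cspan (lie_words (filt_gens k M) \<inter> Lk a) \<subseteq> cspan (low_brackets k M a)"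
    by (rule cspan_least[OF csubspace_cspan])
  ultimately show ?thesis by blast
qed

text \<open>The Jacobi expansion in the main bracket lemma produces a term \<open>[y, [w, v]]\<close>, where \<open>y\<close> has
  degree \<open>t > k\<close>; it lands in \<open>filt (k + 1) M\<close> because either \<open>[w, v]\<close> has degree \<open>0\<close>, or both
  \<open>y\<close> and \<open>[w, v]\<close> have degree above \<open>k + 1\<close>.\<close>

lemma filt_bracket_outer_term:
  assumes M: "graded_subalg M" and kn: "Suc k < n" and abk: "a + b = Suc k" and bn: "b < n"
    and st: "s < n" "k < t" "t < n" "s = a + n - t"
    and w: "w \<in> filt k M \<inter> Lk s" and y: "y \<in> M \<inter> Lk t" and v: "v \<in> filt k M \<inter> Lk b"
  shows "lie_bracket y (lie_bracket w v) \<in> filt (Suc k) M"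
proof (cases "t = Suc k")
  case True
  then have "s + b = n" using st abk by linarith
  then have "(s + b) mod n = 0" by simp
  then have "lie_bracket w v \<in> Lk 0" using bracket[OF st(1) bn] w v by fastforce
  then show ?thesis using bracket_deg0_right csubspace_0[OF csubspace_filt] by simp
next
  case False
  then have tk: "Suc k < t" using st by simp
  then have "(s + b) mod n = n + Suc k - t" using st abk by (simp add: less_diff_conv)
  then have deg: "lie_bracket w v \<in> Lk (n + Suc k - t)" using bracket[OF st(1) bn] w v by fastforce
  have "lie_bracket w v \<in> M"
    using w v filt_subset[OF M] graded_subalg_closed[OF M] by blast
  moreover have "n + Suc k - t < n" "Suc k < n + Suc k - t" using tk st by linarith+
  ultimately have "lie_bracket w v \<in> filt (Suc k) M"
    using component_in_filt[of "n + Suc k - t" "Suc k" M] deg by blast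
  moreover have "y \<in> filt (Suc k) M" using component_in_filt[of t "Suc k" M] y tk st by blast
  ultimately show ?thesis using filt_closed by blast
qed

text \<open>The inductive step of the bracket lemma below, for a generator \<open>[w, y]\<close> of the low
  components: by Jacobi, \<open>[[w, y], v] = [w, [y, v]] - [y, [w, v]]\<close>, where the first term is covered
  by the induction hypothesis (its left factor \<open>w\<close> has larger degree) and the second by
  \<open>filt_bracket_outer_term\<close>.\<close>

lemma filt_bracket_low_generator:
  assumes M: "graded_subalg M" and kn: "Suc k < n" and ak: "a \<le> k" and abk: "a + b = Suc k"
    and bn: "b < n" and v: "v \<in> filt k M \<inter> Lk b" and x: "x \<in> low_brackets k M a"
    and IH: "\<And>s u c v'. n - s < n - a \<Longrightarrow> s < n \<Longrightarrow> u \<in> filt k M \<inter> Lk s \<Longrightarrow> c < n \<Longrightarrow>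
      v' \<in> filt k M \<inter> Lk c \<Longrightarrow> (s + c) mod n = Suc k \<Longrightarrow> lie_bracket u v' \<in> filt (Suc k) M"
  shows "lie_bracket x v \<in> filt (Suc k) M"
proof -
  obtain w y s t where st: "s < n" "k < t" "t < n" "(s + t) mod n = a"
      and w: "w \<in> filt k M \<inter> Lk s" and y: "y \<in> M \<inter> Lk t" and x: "x = lie_bracket w y"
    using x unfolding low_brackets_def by blast
  have s: "s = a + n - t" by (rule degree_wraps[OF ak st(2,3,1,4)])
  have outer: "lie_bracket y (lie_bracket w v) \<in> filt (Suc k) M"
    by (rule filt_bracket_outer_term[OF M kn abk bn st(1-3) s w y v])
  have yv: "lie_bracket y v \<in> filt k M \<inter> Lk ((t + b) mod n)"
    using component_in_filt[of t k M] y v st filt_closed bracket[OF st(3) bn] by blast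
  have "s + (t + b) = Suc k + n" using s st abk by linarith
  then have "(s + (t + b) mod n) mod n = (Suc k + n) mod n" by (simp add: mod_add_right_eq)
  also have "\<dots> = Suc k" using kn by (simp only: mod_add_self2 mod_less)
  finally have inner: "lie_bracket w (lie_bracket y v) \<in> filt (Suc k) M"
    using IH[OF _ st(1) w deg_mod_less yv] s st ak by linarith
  show ?thesis
    using csubspace_diff[OF csubspace_filt inner outer] by (simp add: x jacobi)
qed

text \<open>The proof is by downward induction
  on the degree \<open>a\<close> of the left factor, expanding it as a combination of \<open>low_brackets\<close>.\<close>

lemma filt_bracket:
  assumes M: "graded_subalg M" and kn: "Suc k < n"
  shows "a < n \<Longrightarrow> u \<in> filt k M \<inter> Lk a \<Longrightarrow> b < n \<Longrightarrow> v \<in> filt k M \<inter> Lk b \<Longrightarrow>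
    (a + b) mod n = Suc k \<Longrightarrow> lie_bracket u v \<in> filt (Suc k) M"
proof (induction "n - a" arbitrary: a u b v rule: less_induct)
  case less
  note an = less.prems(1) and u = less.prems(2) and bn = less.prems(3) and v = less.prems(4)
    and ab = less.prems(5)
  consider "a = 0 \<or> b = 0" | "a \<noteq> 0" "b \<noteq> 0" "\<not> (a \<le> k \<and> b \<le> k)" | "a \<noteq> 0" "a \<le> k" "b \<le> k"
    by blast
  then show ?case
  proof cases
    case 1
    then have "lie_bracket u v = 0" using u v bracket_deg0_left bracket_deg0_right by auto
    then show ?thesis using csubspace_0[OF csubspace_filt] by simp
  next
    case 2
    then have "Suc k < a" "Suc k < b" using degrees_high[OF an bn ab] by auto
    then have "u \<in> filt (Suc k) M" "v \<in> filt (Suc k) M"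
      using component_in_filt[of _ "Suc k" M] filt_subset[OF M] u v an bn by blast+
    then show ?thesis by (rule filt_closed)
  next
    case 3
    have abk: "a + b = Suc k" by (rule degrees_low[OF 3(2,3) kn ab])
    have "low_brackets k M a \<subseteq> {x. lie_bracket x v \<in> filt (Suc k) M}"
      using filt_bracket_low_generator[OF M kn 3(2) abk bn v] less.hyps by blast
    then have "cspan (low_brackets k M a) \<subseteq> {x. lie_bracket x v \<in> filt (Suc k) M}"
      by (rule cspan_least[OF csubspace_bracket_preimage[OF csubspace_filt]])
    then show ?thesis using low_component_span[of a k] 3 kn u by auto
  qed
qed

lemma homog_brackets_in_filt:
  assumes M: "graded_subalg M" and kn: "Suc k < n" and NF: "N \<subseteq> filt k M"
  shows "homog_brackets N \<inter> Lk (Suc k) \<subseteq> filt (Suc k) M"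
proof
  fix h assume "h \<in> homog_brackets N \<inter> Lk (Suc k)"
  then obtain a b i j where h: "h = lie_bracket a b" "i < n" "j < n" "a \<in> N \<inter> Lk i"
      "b \<in> N \<inter> Lk j" "h \<in> Lk (Suc k)"
    unfolding homog_brackets_def by blast
  have deg: "h \<in> Lk ((i + j) mod n)" using bracket[OF h(2,3)] h(1,4,5) by blast
  show "h \<in> filt (Suc k) M"
  proof (cases "(i + j) mod n = Suc k")
    case True
    then show ?thesis using filt_bracket[OF M kn h(2) _ h(3)] h(1,4,5) NF by blast
  next
    case False
    then have "h = 0" using homogeneous_unique[OF deg h(6) deg_mod_less kn] by simp
    then show ?thesis using csubspace_0[OF csubspace_filt] by simp
  qed
qed

text \<open>Generators of degree other than \<open>k + 1\<close> are components of \<open>M\<close> of degree \<open>0\<close> or above \<open>k + 1\<close>.\<close>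

lemma filt_derived_step:
  assumes M: "graded_subalg M" and kn: "Suc k < n" and N: "graded_subalg N" and NF: "N \<subseteq> filt k M"
  shows "filt k (derived N) \<subseteq> filt (Suc k) M"
proof -
  have derived_M: "derived N \<subseteq> M"
    using derived_subset[OF graded_subalg_lie_algebra[OF N]] NF filt_subset[OF M] by blast
  have "filt_gens k (derived N) \<subseteq> filt (Suc k) M"
  proof
    fix x assume "x \<in> filt_gens k (derived N)"
    then obtain t where t: "t < n" "t = 0 \<or> k < t" "x \<in> derived N" "x \<in> Lk t"
      unfolding filt_gens_def by blast
    show "x \<in> filt (Suc k) M"
    proof (cases "t = Suc k")
      case False
      then have "t = 0 \<or> Suc k < t" using t(2) by auto
      then have "M \<inter> Lk t \<subseteq> filt (Suc k) M" using component_in_filt t(1) by blast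
      then show ?thesis using derived_M t(3,4) by blast
    next
      case True
      have "x \<in> cspan (homog_brackets N \<inter> Lk t)"
        using cspan_homog_component[OF homog_brackets_homog _ t(4) t(1)] t(3)
          derived_homog_brackets[OF N] by blast
      then show ?thesis
        using cspan_least[OF csubspace_filt homog_brackets_in_filt[OF M kn NF]] True by blast
    qed
  qed
  then show ?thesis
    unfolding filt_def[of k] using csubspace_filt filt_closed by (intro lie_gen_least) auto
qed

text \<open>By
  induction on \<open>k\<close>, using \<open>2^(k+1) - 1 = (2^k - 1) + 1 + (2^k - 1)\<close> and \<open>filt_derived_step\<close>.\<close>

lemma derived_iter_in_filt: "k < n \<Longrightarrow> graded_subalg M \<Longrightarrow> (derived ^^ (2^k - 1)) M \<subseteq> filt k M"
proof (induction k arbitrary: M)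
  case 0
  show ?case
  proof
    fix x assume "x \<in> (derived ^^ (2^0 - 1)) M"
    then obtain z where z: "\<forall>t<n. z t \<in> M \<inter> Lk t" "x = (\<Sum>t<n. z t)"
      using 0 unfolding graded_subalg_def by auto
    have "\<forall>t<n. z t \<in> filt 0 M" using z(1) component_in_filt[of _ 0 M] by blast
    then show "x \<in> filt 0 M" unfolding z(2) by (intro csubspace_sum[OF csubspace_filt]) auto
  qed
next
  case (Suc k)
  define N where "N = (derived ^^ (2^k - 1)) M"
  have "2 ^ Suc k - 1 = (2^k - 1) + Suc (2^k - 1)" by simp
  then have split: "(derived ^^ (2 ^ Suc k - 1)) M = (derived ^^ (2^k - 1)) (derived N)"
    unfolding N_def by (simp only: funpow_add funpow.simps o_apply)
  have N: "graded_subalg N" unfolding N_def using graded_subalg_derived_iter Suc.prems by blast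
  have "(derived ^^ (2^k - 1)) (derived N) \<subseteq> filt k (derived N)"
    using Suc.IH Suc.prems(1) graded_subalg_derived[OF N] by simp
  also have "\<dots> \<subseteq> filt (Suc k) M"
    using filt_derived_step Suc N Suc.IH unfolding N_def by simp
  finally show ?case unfolding split .
qed

text \<open>Kreknin's theorem for a scalar zero component: the \<open>2^(n-1)\<close>-th derived algebra vanishes,
  since \<open>filt (n - 1) M\<close> is generated by scalars.\<close>

theorem kreknin: assumes M: "graded_subalg M" shows "(derived ^^ (2^(n-1))) M = {0}"
proof -
  have "filt_gens (n-1) M \<subseteq> scalars"
    unfolding filt_gens_def scalars_def using scalar by fastforce
  then have "filt (n-1) M \<subseteq> scalars"
    unfolding filt_def by (rule lie_gen_least[OF csubspace_scalars scalars_closed])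
  then have "(derived ^^ (2^(n-1) - 1)) M \<subseteq> scalars"
    using derived_iter_in_filt[OF _ M, of "n - 1"] n_pos by force
  then have "derived ((derived ^^ (2^(n-1) - 1)) M) = {0}" by (rule derived_scalars)
  moreover have "Suc (2^(n-1) - 1) = (2::nat)^(n-1)" by simp
  ultimately show ?thesis by (metis funpow.simps(2) o_apply)
qed

end



section \<open>Eigenvectors modulo an invariant subspace\<close>

type_synonym 'd cvec = "(complex, 'd) vec"

definition invariant :: "'d::finite cmat \<Rightarrow> 'd cvec set \<Rightarrow> bool" where
  "invariant A U \<longleftrightarrow> (\<forall>u\<in>U. A *v u \<in> U)"

lemma lie_bracket_mult_vec: "lie_bracket A B *v x = A *v (B *v x) - B *v (A *v x)"
  unfolding lie_bracket_def by (simp add: matrix_vector_mult_diff_rdistrib matrix_vector_mul_assoc)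

lemma mult_vec_span:
  assumes "\<And>x. x \<in> S \<Longrightarrow> A *v x \<in> T" "vec.subspace T" "x \<in> vec.span S"
  shows "A *v x \<in> T"
  using assms(3)
proof (induction rule: vec.span_induct_alt)
  case base then show ?case using assms(2) by (simp add: vec.subspace_0)
next
  case (step c x y) then show ?case
    using assms by (simp add: vec.add vec.scale vec.subspace_add vec.subspace_scale)
qed

lemma invariant_span: "(\<And>x. x \<in> S \<Longrightarrow> A *v x \<in> vec.span S) \<Longrightarrow> invariant A (vec.span S)"
  unfolding invariant_def by (auto intro: mult_vec_span[OF _ vec.subspace_span])

lemma invariant_mult: "invariant T X \<Longrightarrow> invariant T' X \<Longrightarrow> invariant (T ** T') X"
  unfolding invariant_def by (simp add: matrix_vector_mul_assoc[symmetric])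

definition poly_apply :: "complex poly \<Rightarrow> 'd::finite cmat \<Rightarrow> 'd cvec \<Rightarrow> 'd cvec" where
  "poly_apply p A w = foldr (\<lambda>a v. a *s w + A *v v) (coeffs p) 0"

lemma poly_apply_0 [simp]: "poly_apply 0 A w = 0"
  by (simp add: poly_apply_def)

lemma poly_apply_pCons: "poly_apply (pCons a p) A w = a *s w + A *v poly_apply p A w"
  by (cases "a = 0 \<and> p = 0") (auto simp: poly_apply_def cCons_def)

lemma poly_apply_add: "poly_apply (p + q) A w = poly_apply p A w + poly_apply q A w"
  by (induction p q rule: poly_induct2)
     (simp_all add: poly_apply_pCons vec.add algebra_simps vector_sadd_rdistrib)

lemma poly_apply_diff: "poly_apply (p - q) A w = poly_apply p A w - poly_apply q A w"
  using poly_apply_add[of "p - q" q A w] by simp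

lemma poly_apply_smult: "poly_apply (smult c p) A w = c *s poly_apply p A w"
  by (induction p) (auto simp: poly_apply_pCons vec.scale vector_sadd_rdistrib vector_add_ldistrib)

lemma poly_apply_sum: "poly_apply (sum f I) A w = (\<Sum>i\<in>I. poly_apply (f i) A w)"
  by (induction I rule: infinite_finite_induct) (auto simp: poly_apply_add)

lemma poly_apply_scale_arg: "poly_apply p A (c *s w) = c *s poly_apply p A w"
  by (induction p) (auto simp: poly_apply_pCons vec.scale vector_add_ldistrib mult.commute)

lemma poly_apply_diff_arg: "poly_apply p A (x - y) = poly_apply p A x - poly_apply p A y"
proof (induction p)
  case (pCons a p)
  show ?case by (simp only: poly_apply_pCons pCons.IH vec.diff vector_ssub_ldistrib) (simp add: algebra_simps)
qed simp

lemma poly_apply_commute: "poly_apply p A (A *v w) = A *v poly_apply p A w"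
  by (induction p) (auto simp: poly_apply_pCons vec.add vec.scale)

lemma poly_apply_linear_factor: "poly_apply ([:- r, 1:] * q) A w = poly_apply q A (A *v w - r *s w)"
proof -
  have e: "[:- r, 1:] * q = smult (- r) q + pCons 0 q" by simp
  have "poly_apply ([:- r, 1:] * q) A w = (- r) *s poly_apply q A w + A *v poly_apply q A w"
    unfolding e poly_apply_add poly_apply_smult poly_apply_pCons by simp
  also have "\<dots> = poly_apply q A (A *v w - r *s w)"
    by (simp add: poly_apply_diff_arg poly_apply_commute poly_apply_scale_arg)
  finally show ?thesis .
qed

definition krylov :: "'d::finite cmat \<Rightarrow> 'd cvec \<Rightarrow> nat \<Rightarrow> 'd cvec" where
  "krylov A w j = (((*v) A) ^^ j) w"

lemma krylov_0 [simp]: "krylov A w 0 = w"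
  by (simp add: krylov_def)

lemma krylov_Suc: "krylov A w (Suc j) = A *v krylov A w j"
  by (simp add: krylov_def)

lemma poly_apply_monom: "poly_apply (monom 1 j) A w = krylov A w j"
  by (induction j) (auto simp: monom_Suc poly_apply_pCons krylov_Suc monom_0)

text \<open>Over \<open>\<complex>\<close>, a polynomial annihilating \<open>w \<notin> U\<close> modulo \<open>U\<close> factors into linear factors; one
  of them yields an eigenvector modulo \<open>U\<close>.\<close>

lemma eigenvector_mod_of_poly:
  assumes U: "vec.subspace U" and W: "vec.subspace W" and iW: "invariant A W"
  shows "p \<noteq> 0 \<Longrightarrow> w \<in> W \<Longrightarrow> w \<notin> U \<Longrightarrow> poly_apply p A w \<in> U \<Longrightarrow>
    \<exists>w'\<in>W. w' \<notin> U \<and> (\<exists>\<mu>. A *v w' - \<mu> *s w' \<in> U)"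
proof (induction "degree p" arbitrary: p w rule: less_induct)
  case less
  show ?case
  proof (cases "degree p = 0")
    case True
    then obtain c where pc: "p = [:c:]" by (metis degree_eq_zeroE)
    then have c: "c \<noteq> 0" using less.prems by simp
    have "c *s w \<in> U" using less.prems pc by (simp add: poly_apply_pCons)
    then have "(1 / c) *s (c *s w) \<in> U" using U by (rule vec.subspace_scale[rotated])
    then show ?thesis using c less.prems by simp
  next
    case False
    then have "\<not> constant (poly p)" by (simp add: constant_degree)
    then obtain r where "poly p r = 0" using fundamental_theorem_of_algebra by blast
    then obtain q where pq: "p = [:- r, 1:] * q" using poly_eq_0_iff_dvd by (metis dvdE)
    then have q0: "q \<noteq> 0" using less.prems by auto
    have "degree p = degree [:- r, 1:] + degree q" unfolding pq by (rule degree_mult_eq) (use q0 in auto)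
    then have dq: "degree q < degree p" by simp
    have pe: "poly_apply q A (A *v w - r *s w) \<in> U"
      using less.prems(4) unfolding pq poly_apply_linear_factor .
    show ?thesis
    proof (cases "A *v w - r *s w \<in> U")
      case True then show ?thesis using less.prems by blast
    next
      case False
      have "A *v w - r *s w \<in> W" using iW less.prems W unfolding invariant_def
        by (simp add: vec.subspace_diff vec.subspace_scale)
      then show ?thesis using less.hyps[OF dq q0 _ False pe] by blast
    qed
  qed
qed

text \<open>The Krylov spaces \<open>U + span {A\<^sup>i w | i < j}\<close> grow until they stabilize, which happens in
  finite dimension.\<close>

definition krylov_space :: "'d::finite cmat \<Rightarrow> 'd cvec \<Rightarrow> 'd cvec set \<Rightarrow> nat \<Rightarrow> 'd cvec set" where
  "krylov_space A w U j = vec.span (U \<union> krylov A w ` {..<j})"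

lemma krylov_terminates:
  fixes A :: "'d::finite cmat"
  shows "\<exists>m. krylov A w m \<in> krylov_space A w U m"
proof (rule ccontr)
  assume "\<nexists>m. krylov A w m \<in> krylov_space A w U m"
  moreover have "vec.span (krylov A w ` {..<j}) \<subseteq> krylov_space A w U j" for j
    unfolding krylov_space_def by (rule vec.span_mono) blast
  ultimately have new: "krylov A w j \<notin> vec.span (krylov A w ` {..<j})" for j
    by blast
  have indep: "vec.independent (krylov A w ` {..<N}) \<and> card (krylov A w ` {..<N}) = N" for N
  proof (induction N)
    case 0 then show ?case by (simp add: vec.independent_empty)
  next
    case (Suc N)
    have notin: "krylov A w N \<notin> krylov A w ` {..<N}"
    proof
      assume "krylov A w N \<in> krylov A w ` {..<N}"
      then have "krylov A w N \<in> vec.span (krylov A w ` {..<N})" by (rule vec.span_base)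
      with new show False by blast
    qed
    have "krylov A w ` {..<Suc N} = insert (krylov A w N) (krylov A w ` {..<N})"
      by (simp add: lessThan_Suc)
    then show ?case using Suc new[of N] notin by (simp add: vec.independent_insert card_insert_if)
  qed
  have "card (krylov A w ` {..<Suc CARD('d)}) \<le> vec.dim (UNIV :: 'd cvec set)"
    by (rule vec.independent_card_le_dim[OF subset_UNIV conjunct1[OF indep]])
  then show False using indep vec_dim_card[where 'a=complex and 'n='d] by simp
qed

lemma span_Un_image:
  assumes U: "vec.subspace U" and x: "x \<in> vec.span (U \<union> f ` I)" and I: "finite I"
  shows "\<exists>u\<in>U. \<exists>c. x = u + (\<Sum>i\<in>I. c i *s f i)"
  using x
proof (induction rule: vec.span_induct_alt)
  case base
  show ?case by (rule bexI[of _ 0], rule exI[of _ "\<lambda>i. 0"]) (auto simp: vec.subspace_0[OF U])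
next
  case (step a x y)
  then obtain u c where u: "u \<in> U" "y = u + (\<Sum>i\<in>I. c i *s f i)" by blast
  from step(1) show ?case
  proof
    assume "x \<in> U"
    then show ?thesis using u U
      by (intro bexI[of _ "a *s x + u"] exI[of _ c]) (auto simp: vec.subspace_add vec.subspace_scale)
  next
    assume "x \<in> f ` I"
    then obtain j where j: "j \<in> I" "x = f j" by blast
    have "(\<Sum>i\<in>I. (c i + (if i = j then a else 0)) *s f i) = (\<Sum>i\<in>I. c i *s f i) + a *s f j"
      using I j by (simp add: vec.scale_left_distrib sum.distrib if_distrib[of "\<lambda>t. t *s _"] cong: if_cong)
    then show ?thesis using u j
      by (intro bexI[of _ u] exI[of _ "\<lambda>i. c i + (if i = j then a else 0)"]) (auto simp: algebra_simps)
  qed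
qed

text \<open>An operator leaving \<open>U \<subset> W\<close> invariant has an eigenvector in \<open>W\<close> modulo \<open>U\<close>: the linear
  relation ending the Krylov sequence gives a monic annihilating polynomial.\<close>

lemma eigenvector_mod:
  assumes U: "vec.subspace U" and W: "vec.subspace W" and UW: "U \<subseteq> W" "U \<noteq> W"
    and iW: "invariant A W"
  shows "\<exists>w\<in>W. w \<notin> U \<and> (\<exists>\<mu>. A *v w - \<mu> *s w \<in> U)"
proof -
  obtain w0 where w0: "w0 \<in> W" "w0 \<notin> U" using UW by blast
  obtain m where "krylov A w0 m \<in> krylov_space A w0 U m" using krylov_terminates by blast
  then obtain u c where uc: "u \<in> U" "krylov A w0 m = u + (\<Sum>i\<in>{..<m}. c i *s krylov A w0 i)"
    using span_Un_image[OF U] unfolding krylov_space_def by blast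
  define p where "p = monom 1 m - (\<Sum>i\<in>{..<m}. smult (c i) (monom 1 i))"
  have "poly_apply p A w0 = krylov A w0 m - (\<Sum>i\<in>{..<m}. c i *s krylov A w0 i)"
    unfolding p_def poly_apply_diff poly_apply_sum poly_apply_smult poly_apply_monom ..
  then have "poly_apply p A w0 \<in> U" using uc by simp
  moreover have "coeff p m = 1" unfolding p_def by (simp add: coeff_sum)
  then have "p \<noteq> 0" by auto
  ultimately show ?thesis using eigenvector_mod_of_poly[OF U W iW] w0 by blast
qed

section \<open>The trace on a quotient\<close>

text \<open>For a basis \<open>B\<close> of \<open>W\<close> extending a basis \<open>BU\<close> of \<open>U\<close>, the trace of an operator leaving both
  invariant, computed on the quotient \<open>W / U\<close>: the sum of the diagonal coordinates at the basis
  vectors outside \<open>BU\<close>.\<close>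

definition quot_trace :: "'d::finite cvec set \<Rightarrow> 'd cvec set \<Rightarrow> 'd cmat \<Rightarrow> complex" where
  "quot_trace B BU T = (\<Sum>b\<in>B - BU. vec.representation B (T *v b) b)"

lemma representation_outside:
  assumes "vec.independent B" "x \<in> vec.span S" "S \<subseteq> B" "b \<notin> S"
  shows "vec.representation B x b = 0"
proof -
  have "vec.representation B x = vec.representation S x"
    by (rule vec.representation_extend[OF assms(1,2,3)])
  then show ?thesis using vec.representation_ne_zero[of S x b] assms(4) by auto
qed

lemma representation_mult_vec:
  assumes B: "vec.independent B" "finite B" and iT: "invariant T (vec.span B)" and x: "x \<in> vec.span B"
  shows "vec.representation B (T *v x) b =
    (\<Sum>b'\<in>B. vec.representation B x b' * vec.representation B (T *v b') b)"
proof -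
  have "x = (\<Sum>b'\<in>B. vec.representation B x b' *s b')"
    using vec.sum_representation_eq[OF B(1) x B(2) order_refl] by simp
  then have "T *v x = (\<Sum>b'\<in>B. vec.representation B x b' *s (T *v b'))"
    by (metis (no_types, lifting) vec.scale vec.sum sum.cong)
  moreover have "\<And>b'. b' \<in> B \<Longrightarrow> T *v b' \<in> vec.span B"
    using iT vec.span_base unfolding invariant_def by blast
  ultimately show ?thesis
    by (simp add: vec.representation_sum[OF B(1)] vec.representation_scale[OF B(1)] vec.span_scale)
qed

text \<open>The quotient trace of a product is a double sum over the basis vectors outside \<open>BU\<close>: the
  contributions of \<open>BU\<close> vanish since \<open>T\<close> maps \<open>span BU\<close> into itself.\<close>

lemma quot_trace_mult:
  assumes B: "vec.independent B" "finite B" and BU: "BU \<subseteq> B"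
    and iT: "invariant T (vec.span B)" "invariant T (vec.span BU)" and iT': "invariant T' (vec.span B)"
  shows "quot_trace B BU (T ** T') = (\<Sum>b\<in>B - BU. \<Sum>b'\<in>B - BU.
      vec.representation B (T' *v b) b' * vec.representation B (T *v b') b)"
  unfolding quot_trace_def matrix_vector_mul_assoc[symmetric]
proof (rule sum.cong[OF refl])
  fix b assume b: "b \<in> B - BU"
  let ?r = "\<lambda>b'. vec.representation B (T' *v b) b' * vec.representation B (T *v b') b"
  have "T' *v b \<in> vec.span B" using iT' b vec.span_base unfolding invariant_def by blast
  then have "vec.representation B (T *v (T' *v b)) b = (\<Sum>b'\<in>B. ?r b')"
    by (rule representation_mult_vec[OF B iT(1)])
  also have "\<dots> = (\<Sum>b'\<in>B - BU. ?r b') + (\<Sum>b'\<in>BU. ?r b')"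
    using B(2) BU by (simp add: sum.subset_diff[of BU B] add.commute)
  also have "(\<Sum>b'\<in>BU. ?r b') = 0"
  proof (rule sum.neutral, intro ballI)
    fix b' assume "b' \<in> BU"
    then have "T *v b' \<in> vec.span BU" using iT(2) vec.span_base unfolding invariant_def by blast
    then show "?r b' = 0" using representation_outside[OF B(1) _ BU] b by simp
  qed
  finally show "vec.representation B (T *v (T' *v b)) b = (\<Sum>b'\<in>B - BU. ?r b')" by simp
qed

lemma quot_trace_commute:
  assumes B: "vec.independent B" "finite B" and BU: "BU \<subseteq> B"
    and iT: "invariant T (vec.span B)" "invariant T (vec.span BU)"
    and iT': "invariant T' (vec.span B)" "invariant T' (vec.span BU)"
  shows "quot_trace B BU (T ** T') = quot_trace B BU (T' ** T)"
  unfolding quot_trace_mult[OF B BU iT iT'(1)] quot_trace_mult[OF B BU iT' iT(1)]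
  by (subst sum.swap) (simp add: mult.commute)

lemma quot_trace_diff:
  assumes B: "vec.independent B" and iT: "invariant T (vec.span B)" and iT': "invariant T' (vec.span B)"
  shows "quot_trace B BU (T - T') = quot_trace B BU T - quot_trace B BU T'"
proof -
  have "vec.representation B ((T - T') *v b) b =
      vec.representation B (T *v b) b - vec.representation B (T' *v b) b" if "b \<in> B" for b
  proof -
    have "T *v b \<in> vec.span B" "T' *v b \<in> vec.span B"
      using that iT iT' vec.span_base unfolding invariant_def by blast+
    then show ?thesis by (simp add: matrix_vector_mult_diff_rdistrib vec.representation_diff[OF B])
  qed
  then show ?thesis unfolding quot_trace_def by (simp add: sum_subtractf)
qed

lemma quot_trace_scalar:
  assumes B: "vec.independent B"
    and tri: "\<And>b. b \<in> B - BU \<Longrightarrow> T *v b - l *s b \<in> vec.span (B - {b})"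
  shows "quot_trace B BU T = l * of_nat (card (B - BU))"
proof -
  have "vec.representation B (T *v b) b = l" if b: "b \<in> B - BU" for b
  proof -
    have sb: "b \<in> vec.span B" using b vec.span_base by blast
    have y: "T *v b - l *s b \<in> vec.span B" using tri[OF b] vec.span_mono[of "B - {b}" B] by blast
    have "vec.representation B (T *v b) b =
        vec.representation B (l *s b) b + vec.representation B (T *v b - l *s b) b"
      using fun_cong[OF vec.representation_add[OF B y vec.span_scale[OF sb], of l], of b] by simp
    moreover have "vec.representation B (T *v b - l *s b) b = 0"
      by (rule representation_outside[OF B tri[OF b]]) auto
    moreover have "vec.representation B (l *s b) b = l"
      using b by (simp add: vec.representation_scale[OF B sb] vec.representation_basis[OF B])
    ultimately show ?thesis by simp
  qed
  then show ?thesis unfolding quot_trace_def by (simp add: mult.commute)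
qed

text \<open>The trace argument at the heart of Lie's theorem: a commutator acting as a scalar \<open>l\<close> on
  a nonzero quotient has \<open>l = 0\<close>, because quotient traces of commutators vanish in
  characteristic zero.\<close>

lemma commutator_scalar_zero:
  assumes B: "vec.independent B" "finite B" and BU: "BU \<subseteq> B" "BU \<noteq> B"
    and iT: "invariant T (vec.span B)" "invariant T (vec.span BU)"
    and iT': "invariant T' (vec.span B)" "invariant T' (vec.span BU)"
    and tri: "\<And>b. b \<in> B - BU \<Longrightarrow> lie_bracket T T' *v b - l *s b \<in> vec.span (B - {b})"
  shows "l = 0"
proof -
  have "quot_trace B BU (lie_bracket T T') = quot_trace B BU (T ** T') - quot_trace B BU (T' ** T)"
    unfolding lie_bracket_def
    using quot_trace_diff[OF B(1) invariant_mult[OF iT(1) iT'(1)] invariant_mult[OF iT'(1) iT(1)]] .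
  also have "\<dots> = 0" using quot_trace_commute[OF B BU(1) iT iT'] by simp
  finally have "quot_trace B BU (lie_bracket T T') = 0" .
  moreover have "quot_trace B BU (lie_bracket T T') = l * of_nat (card (B - BU))"
    by (rule quot_trace_scalar[OF B(1) tri])
  moreover have "card (B - BU) \<noteq> 0" using BU B(2) by auto
  ultimately show ?thesis by simp
qed

lemma basis_extension:
  assumes U: "vec.subspace U" and W: "vec.subspace W" and UW: "U \<subseteq> W"
  obtains BU B where "BU \<subseteq> B" "vec.independent B" "finite B" "vec.span BU = U" "vec.span B = W"
proof -
  obtain BU where BU: "BU \<subseteq> U" "vec.independent BU" "U \<subseteq> vec.span BU"
    using vec.maximal_independent_subset[of U] by blast
  obtain B where B: "BU \<subseteq> B" "B \<subseteq> W" "vec.independent B" "W \<subseteq> vec.span B"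
    using vec.maximal_independent_subset_extend[of BU W] BU UW by blast
  have "vec.span BU = U" using BU U by (metis vec.span_subspace)
  moreover have "vec.span B = W" using B W by (metis vec.span_subspace)
  moreover have "finite B" using B(3) vec.finiteI_independent by blast
  ultimately show ?thesis using that B by blast
qed

section \<open>Lie's lemma: weight spaces are invariant\<close>

definition weight_space ::
    "'d::finite cvec set \<Rightarrow> 'd cvec set \<Rightarrow> 'd cmat set \<Rightarrow> ('d cmat \<Rightarrow> complex) \<Rightarrow> 'd cvec set" where
  "weight_space U W I lam = {w\<in>W. \<forall>B\<in>I. B *v w - lam B *s w \<in> U}"

lemma weight_space_subspace:
  assumes U: "vec.subspace U" and W: "vec.subspace W"
  shows "vec.subspace (weight_space U W I lam)"
  unfolding vec.subspace_def weight_space_def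
proof (intro conjI ballI allI)
  show "0 \<in> {w \<in> W. \<forall>B\<in>I. B *v w - lam B *s w \<in> U}"
    using U W by (simp add: vec.subspace_0)
next
  fix x y assume x: "x \<in> {w \<in> W. \<forall>B\<in>I. B *v w - lam B *s w \<in> U}"
    and y: "y \<in> {w \<in> W. \<forall>B\<in>I. B *v w - lam B *s w \<in> U}"
  have "B *v (x + y) - lam B *s (x + y) \<in> U" if B: "B \<in> I" for B
  proof -
    have "B *v (x + y) - lam B *s (x + y) = (B *v x - lam B *s x) + (B *v y - lam B *s y)"
      by (simp add: vec.add vec.scale_right_distrib algebra_simps)
    then show ?thesis using x y B by (simp only:) (intro vec.subspace_add[OF U]; blast)
  qed
  then show "x + y \<in> {w \<in> W. \<forall>B\<in>I. B *v w - lam B *s w \<in> U}"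
    using x y W by (auto simp: vec.subspace_add)
next
  fix c x assume x: "x \<in> {w \<in> W. \<forall>B\<in>I. B *v w - lam B *s w \<in> U}"
  have "B *v (c *s x) - lam B *s (c *s x) \<in> U" if B: "B \<in> I" for B
  proof -
    have "B *v (c *s x) - lam B *s (c *s x) = c *s (B *v x - lam B *s x)"
      by (simp add: vec.scale vec.scale_right_diff_distrib mult.commute)
    then show ?thesis using x B by (simp only:) (intro vec.subspace_scale[OF U]; blast)
  qed
  then show "c *s x \<in> {w \<in> W. \<forall>B\<in>I. B *v w - lam B *s w \<in> U}"
    using x W by (auto simp: vec.subspace_scale)
qed

lemma weight_space_superset:
  assumes U: "vec.subspace U" and "U \<subseteq> W" and "\<forall>B\<in>I. invariant B U"
  shows "U \<subseteq> weight_space U W I lam"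
  using assms unfolding weight_space_def invariant_def
  by (auto intro!: vec.subspace_diff[OF U] vec.subspace_scale[OF U])

lemma krylov_space_0: "vec.subspace U \<Longrightarrow> krylov_space A w U 0 = U"
  unfolding krylov_space_def by simp

lemma krylov_space_mono: "i \<le> j \<Longrightarrow> krylov_space A w U i \<subseteq> krylov_space A w U j"
  unfolding krylov_space_def by (intro vec.span_mono) auto

lemma krylov_in_space: "i < j \<Longrightarrow> krylov A w i \<in> krylov_space A w U j"
  unfolding krylov_space_def by (intro vec.span_base) auto

lemma subspace_krylov_space: "vec.subspace (krylov_space A w U j)"
  unfolding krylov_space_def by simp

lemma krylov_space_step:
  assumes "invariant A U" "x \<in> krylov_space A w U j"
  shows "A *v x \<in> krylov_space A w U (Suc j)"
proof (rule mult_vec_span[OF _ subspace_krylov_space])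
  show "x \<in> vec.span (U \<union> krylov A w ` {..<j})" using assms(2) unfolding krylov_space_def .
  fix y assume "y \<in> U \<union> krylov A w ` {..<j}"
  then show "A *v y \<in> krylov_space A w U (Suc j)"
  proof
    assume "y \<in> U" then show ?thesis
      using assms(1) unfolding invariant_def krylov_space_def by (blast intro: vec.span_base)
  next
    assume "y \<in> krylov A w ` {..<j}"
    then obtain i where "i < j" "y = krylov A w i" by blast
    then show ?thesis using krylov_in_space[of "Suc i" "Suc j"] by (simp add: krylov_Suc)
  qed
qed

lemma krylov_space_invariant:
  assumes "invariant A U" "krylov A w m \<in> krylov_space A w U m"
  shows "invariant A (krylov_space A w U m)"
  unfolding invariant_def
proof (intro ballI, rule mult_vec_span[OF _ subspace_krylov_space])
  fix x assume "x \<in> krylov_space A w U m"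
  then show "x \<in> vec.span (U \<union> krylov A w ` {..<m})" unfolding krylov_space_def .
next
  fix y assume "y \<in> U \<union> krylov A w ` {..<m}"
  then show "A *v y \<in> krylov_space A w U m"
  proof
    assume "y \<in> U" then show ?thesis
      using assms(1) unfolding invariant_def krylov_space_def by (blast intro: vec.span_base)
  next
    assume "y \<in> krylov A w ` {..<m}"
    then obtain i where i: "i < m" "y = krylov A w i" by blast
    then have Ay: "A *v y = krylov A w (Suc i)" by (simp add: krylov_Suc)
    show ?thesis
    proof (cases "Suc i = m")
      case True then show ?thesis using assms(2) Ay by simp
    next
      case False then show ?thesis using krylov_in_space[of "Suc i" m] i(1) Ay by simp
    qed
  qed
qed

lemma krylov_weight:
  assumes U: "vec.subspace U" and iAU: "invariant A U" and Ibr: "\<And>B. B \<in> I \<Longrightarrow> lie_bracket B A \<in> I"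
    and w: "\<And>B. B \<in> I \<Longrightarrow> B *v w - lam B *s w \<in> U"
  shows "B \<in> I \<Longrightarrow> B *v krylov A w j - lam B *s krylov A w j \<in> krylov_space A w U j"
proof (induction j arbitrary: B)
  case 0 then show ?case using w krylov_space_0[OF U] by simp
next
  case (Suc j)
  let ?K = "krylov_space A w U" and ?x = "krylov A w j" and ?C = "lie_bracket B A"
  have e: "B *v krylov A w (Suc j) - lam B *s krylov A w (Suc j) =
      A *v (B *v ?x - lam B *s ?x) + (?C *v ?x - lam ?C *s ?x) + lam ?C *s ?x"
    unfolding krylov_Suc lie_bracket_mult_vec by (simp add: vec.diff vec.scale algebra_simps)
  have "A *v (B *v ?x - lam B *s ?x) \<in> ?K (Suc j)"
    using krylov_space_step[OF iAU] Suc by blast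
  moreover have "?C *v ?x - lam ?C *s ?x \<in> ?K (Suc j)"
    using Suc.IH[OF Ibr[OF Suc.prems]] krylov_space_mono[of j "Suc j" A w U] by auto
  moreover have "lam ?C *s ?x \<in> ?K (Suc j)"
    using krylov_in_space[of j "Suc j"] by (intro vec.subspace_scale[OF subspace_krylov_space]) simp
  ultimately show ?case unfolding e by (intro vec.subspace_add[OF subspace_krylov_space])
qed

lemma krylov_space_invariant_weight:
  assumes "invariant B U" and weight: "\<And>j. B *v krylov A w j - l *s krylov A w j \<in> krylov_space A w U j"
  shows "invariant B (krylov_space A w U m)"
  unfolding invariant_def
proof (intro ballI, rule mult_vec_span[OF _ subspace_krylov_space])
  fix x assume "x \<in> krylov_space A w U m"
  then show "x \<in> vec.span (U \<union> krylov A w ` {..<m})" unfolding krylov_space_def .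
next
  fix y assume "y \<in> U \<union> krylov A w ` {..<m}"
  then show "B *v y \<in> krylov_space A w U m"
  proof
    assume "y \<in> U" then show ?thesis
      using assms(1) unfolding invariant_def krylov_space_def by (blast intro: vec.span_base)
  next
    assume "y \<in> krylov A w ` {..<m}"
    then obtain i where i: "i < m" "y = krylov A w i" by blast
    have "B *v y - l *s y \<in> krylov_space A w U m" using weight[of i] i krylov_space_mono[of i m A w U] by auto
    moreover have "l *s y \<in> krylov_space A w U m"
      using krylov_in_space[OF i(1)] i vec.subspace_scale[OF subspace_krylov_space] by blast
    ultimately show ?thesis using vec.subspace_add[OF subspace_krylov_space] by fastforce
  qed
qed

lemma krylov_space_span:
  assumes "vec.span BU = U" "BU \<subseteq> U"
  shows "vec.span (BU \<union> krylov A w ` {..<j}) = krylov_space A w U j"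
  unfolding krylov_space_def
proof
  show "vec.span (BU \<union> krylov A w ` {..<j}) \<subseteq> vec.span (U \<union> krylov A w ` {..<j})"
    using assms by (intro vec.span_mono) blast
  have "U \<subseteq> vec.span (BU \<union> krylov A w ` {..<j})"
    using assms(1) vec.span_mono[of BU "BU \<union> krylov A w ` {..<j}"] by blast
  moreover have "krylov A w ` {..<j} \<subseteq> vec.span (BU \<union> krylov A w ` {..<j})"
    using vec.span_superset[of "BU \<union> krylov A w ` {..<j}"] by blast
  ultimately show "vec.span (U \<union> krylov A w ` {..<j}) \<subseteq> vec.span (BU \<union> krylov A w ` {..<j})"
    by (intro vec.span_minimal) auto
qed

lemma krylov_basis_independent:
  assumes BU: "vec.independent BU" "vec.span BU = U" "BU \<subseteq> U"
    and new: "\<And>j. j < m \<Longrightarrow> krylov A w j \<notin> krylov_space A w U j"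
  shows "vec.independent (BU \<union> krylov A w ` {..<m})"
  using new
proof (induction m)
  case (Suc m)
  have e: "BU \<union> krylov A w ` {..<Suc m} = insert (krylov A w m) (BU \<union> krylov A w ` {..<m})"
    by (auto simp: lessThan_Suc)
  have "krylov A w m \<notin> vec.span (BU \<union> krylov A w ` {..<m})"
    using Suc.prems krylov_space_span[OF BU(2,3)] by simp
  then show ?case unfolding e using Suc by (intro vec.independent_insertI) auto
qed (simp add: BU)

text \<open>The trace argument: with \<open>m\<close> the length of the Krylov chain of \<open>w\<close>, the commutator
  \<open>[B, A]\<close> acts on the Krylov space \<open>K\<^sub>m\<close> by its weight, modulo \<open>U\<close>, and \<open>A\<close> and \<open>B\<close> preserve
  \<open>K\<^sub>m\<close>; so that weight is zero.\<close>

lemma commutator_weight_zero: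
  assumes U: "vec.subspace U" and iAU: "invariant A U" and iIU: "\<And>B. B \<in> I \<Longrightarrow> invariant B U"
    and Ibr: "\<And>B. B \<in> I \<Longrightarrow> lie_bracket B A \<in> I"
    and w: "\<And>B. B \<in> I \<Longrightarrow> B *v w - lam B *s w \<in> U" and wU: "w \<notin> U" and B: "B \<in> I"
  shows "lam (lie_bracket B A) = 0"
proof -
  let ?K = "krylov_space A w U"
  define m where "m = (LEAST j. krylov A w j \<in> ?K j)"
  have stop: "krylov A w m \<in> ?K m" unfolding m_def using krylov_terminates by (rule LeastI_ex)
  have new: "\<And>j. j < m \<Longrightarrow> krylov A w j \<notin> ?K j" unfolding m_def using not_less_Least by blast
  have m0: "m \<noteq> 0" using stop wU krylov_space_0[OF U] by (metis krylov_0)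
  obtain BU where BU: "BU \<subseteq> U" "vec.independent BU" "vec.span BU = U"
    using vec.maximal_independent_subset[of U] U by (metis vec.span_subspace)
  define Bm where "Bm = BU \<union> krylov A w ` {..<m}"
  have indep: "vec.independent Bm" unfolding Bm_def by (rule krylov_basis_independent[OF BU(2,3,1) new])
  have span: "vec.span Bm = ?K m" unfolding Bm_def by (rule krylov_space_span[OF BU(3,1)])
  have "krylov A w 0 \<in> krylov A w ` {..<m}" using m0 by blast
  moreover have "krylov A w 0 \<notin> BU" using wU BU(1) by auto
  ultimately have "krylov A w 0 \<in> Bm - BU" unfolding Bm_def by blast
  then have BU_Bm: "BU \<subseteq> Bm" "BU \<noteq> Bm" unfolding Bm_def by auto
  show ?thesis
  proof (rule commutator_scalar_zero[OF indep vec.finiteI_independent[OF indep] BU_Bm])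
    show "invariant B (vec.span Bm)"
      unfolding span using krylov_space_invariant_weight[OF iIU[OF B]] krylov_weight[OF U iAU Ibr w B] .
    show "invariant A (vec.span Bm)" unfolding span by (rule krylov_space_invariant[OF iAU stop])
    show "invariant B (vec.span BU)" "invariant A (vec.span BU)" using iIU[OF B] iAU BU(3) by auto
    fix b assume "b \<in> Bm - BU"
    then obtain j where j: "j < m" "b = krylov A w j" unfolding Bm_def by blast
    have "lie_bracket B A *v b - lam (lie_bracket B A) *s b \<in> ?K j"
      using krylov_weight[OF U iAU Ibr w Ibr[OF B]] j(2) by blast
    moreover have "b \<notin> BU \<union> krylov A w ` {..<j}"
      using new[OF j(1)] j(2) vec.span_base krylov_space_span[OF BU(3,1)] by metis
    then have "BU \<union> krylov A w ` {..<j} \<subseteq> Bm - {b}" unfolding Bm_def using j(1) by auto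
    then have "?K j \<subseteq> vec.span (Bm - {b})"
      unfolding krylov_space_span[OF BU(3,1), symmetric] by (rule vec.span_mono)
    ultimately show "lie_bracket B A *v b - lam (lie_bracket B A) *s b \<in> vec.span (Bm - {b})" by blast
  qed
qed

lemma weight_space_invariant:
  assumes U: "vec.subspace U" and UW: "U \<subseteq> W" and iAU: "invariant A U" and iAW: "invariant A W"
    and iIU: "\<And>B. B \<in> I \<Longrightarrow> invariant B U" and Ibr: "\<And>B. B \<in> I \<Longrightarrow> lie_bracket B A \<in> I"
  shows "invariant A (weight_space U W I lam)"
  unfolding invariant_def
proof
  fix w assume w: "w \<in> weight_space U W I lam"
  show "A *v w \<in> weight_space U W I lam"
  proof (cases "w \<in> U")
    case True then show ?thesis
      using iAU weight_space_superset[OF U UW] iIU unfolding invariant_def by blast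
  next
    case False
    have weight: "\<And>B. B \<in> I \<Longrightarrow> B *v w - lam B *s w \<in> U" using w unfolding weight_space_def by blast
    have "B *v (A *v w) - lam B *s (A *v w) \<in> U" if B: "B \<in> I" for B
    proof -
      have e: "B *v (A *v w) - lam B *s (A *v w) =
          A *v (B *v w - lam B *s w) + (lie_bracket B A *v w - lam (lie_bracket B A) *s w)"
        using commutator_weight_zero[OF U iAU iIU Ibr weight False B]
        by (simp add: lie_bracket_mult_vec vec.diff vec.scale algebra_simps)
      have "A *v (B *v w - lam B *s w) \<in> U" using iAU weight B unfolding invariant_def by blast
      then show ?thesis unfolding e using weight[OF Ibr[OF B]] by (intro vec.subspace_add[OF U])
    qed
    moreover have "A *v w \<in> W" using iAW w unfolding invariant_def weight_space_def by blast
    ultimately show ?thesis unfolding weight_space_def by blast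
  qed
qed

section \<open>Lie's theorem\<close>

definition minimal_invariant :: "'d::finite cmat set \<Rightarrow> 'd cvec set \<Rightarrow> 'd cvec set \<Rightarrow> bool" where
  "minimal_invariant S U W \<longleftrightarrow> vec.subspace W \<and> U \<subseteq> W \<and> U \<noteq> W \<and> (\<forall>A\<in>S. invariant A W) \<and>
     (\<forall>E. vec.subspace E \<and> U \<subseteq> E \<and> U \<noteq> E \<and> E \<subseteq> W \<and> (\<forall>A\<in>S. invariant A E) \<longrightarrow> E = W)"

text \<open>Between \<open>U\<close> and a larger invariant \<open>V\<close>, an invariant subspace of least dimension is minimal.\<close>

lemma minimal_invariant_exists:
  assumes "vec.subspace V" "U \<subseteq> V" "U \<noteq> V" "\<forall>A\<in>S. invariant A V"
  shows "\<exists>W. minimal_invariant S U W \<and> W \<subseteq> V"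
proof -
  define cand where "cand W \<longleftrightarrow> vec.subspace W \<and> U \<subseteq> W \<and> U \<noteq> W \<and> W \<subseteq> V \<and> (\<forall>A\<in>S. invariant A W)"
    for W
  have "cand V" unfolding cand_def using assms by blast
  then obtain W where W: "cand W" and least: "\<And>W'. cand W' \<Longrightarrow> vec.dim W \<le> vec.dim W'"
    using ex_has_least_nat[of cand V vec.dim] by blast
  have W': "vec.subspace W" "U \<subseteq> W" "U \<noteq> W" "W \<subseteq> V" "\<forall>A\<in>S. invariant A W"
    using W unfolding cand_def by auto
  have "E = W" if E: "vec.subspace E \<and> U \<subseteq> E \<and> U \<noteq> E \<and> E \<subseteq> W \<and> (\<forall>A\<in>S. invariant A E)" for E
  proof -
    have "cand E" unfolding cand_def using E W'(4) by auto
    then have "vec.dim W \<le> vec.dim E" by (rule least)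
    then show "E = W" using vec.subspace_dim_equal[of E W] E W'(1) by simp
  qed
  then have "minimal_invariant S U W" unfolding minimal_invariant_def using W' by blast
  then show ?thesis using W'(4) by blast
qed

lemma minimal_invariant_weight_space:
  assumes W: "minimal_invariant S U W" and U: "vec.subspace U" and iIU: "\<forall>B\<in>I. invariant B U"
    and w: "w \<in> weight_space U W I lam" "w \<notin> U"
    and iS: "\<forall>A\<in>S. invariant A (weight_space U W I lam)"
  shows "weight_space U W I lam = W"
proof -
  have "vec.subspace W" "U \<subseteq> W" using W unfolding minimal_invariant_def by auto
  then have "vec.subspace (weight_space U W I lam)" "U \<subseteq> weight_space U W I lam"
    using weight_space_subspace[OF U] weight_space_superset[OF U _ iIU] by auto
  moreover have "weight_space U W I lam \<subseteq> W" unfolding weight_space_def by blast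
  moreover have "U \<noteq> weight_space U W I lam" using w by blast
  moreover have "\<forall>E. vec.subspace E \<and> U \<subseteq> E \<and> U \<noteq> E \<and> E \<subseteq> W \<and> (\<forall>A\<in>S. invariant A E) \<longrightarrow> E = W"
    using W unfolding minimal_invariant_def by (elim conjE)
  ultimately show ?thesis using iS by simp
qed

lemma commutator_weight_zero_quotient:
  assumes U: "vec.subspace U" and W: "vec.subspace W" and UW: "U \<subseteq> W" "U \<noteq> W"
    and iA: "invariant A U" "invariant A W" and iC: "invariant C U" "invariant C W"
    and weight: "\<And>w. w \<in> W \<Longrightarrow> lie_bracket A C *v w - l *s w \<in> U"
  shows "l = 0"
proof -
  obtain BU B where B: "BU \<subseteq> B" "vec.independent B" "finite B" "vec.span BU = U" "vec.span B = W"
    using basis_extension[OF U W UW(1)] by blast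
  show ?thesis
  proof (rule commutator_scalar_zero[OF B(2,3,1)])
    show "BU \<noteq> B" using B UW(2) by blast
    show "invariant A (vec.span B)" "invariant C (vec.span B)"
      "invariant A (vec.span BU)" "invariant C (vec.span BU)" using iA iC B(4,5) by auto
    fix b assume b: "b \<in> B - BU"
    then have "lie_bracket A C *v b - l *s b \<in> U" using weight B(5) vec.span_base by blast
    moreover have "U \<subseteq> vec.span (B - {b})"
      unfolding B(4)[symmetric] using b B(1) by (intro vec.span_mono) blast
    ultimately show "lie_bracket A C *v b - l *s b \<in> vec.span (B - {b})" by blast
  qed
qed

lemma eigenspace_mod_invariant:
  assumes U: "vec.subspace U" and iC: "invariant C U" "invariant C W"
    and comm: "\<And>w. w \<in> W \<Longrightarrow> lie_bracket A C *v w \<in> U"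
  shows "invariant C (weight_space U W {A} (\<lambda>_. \<mu>))"
  unfolding invariant_def
proof
  fix x assume "x \<in> weight_space U W {A} (\<lambda>_. \<mu>)"
  then have x: "x \<in> W" "A *v x - \<mu> *s x \<in> U" unfolding weight_space_def by auto
  have e: "A *v (C *v x) - \<mu> *s (C *v x) = C *v (A *v x - \<mu> *s x) + lie_bracket A C *v x"
    by (simp add: lie_bracket_mult_vec vec.diff vec.scale algebra_simps)
  have "C *v (A *v x - \<mu> *s x) \<in> U" using iC(1) x(2) unfolding invariant_def by blast
  then have "A *v (C *v x) - \<mu> *s (C *v x) \<in> U"
    unfolding e using comm[OF x(1)] by (rule vec.subspace_add[OF U])
  moreover have "C *v x \<in> W" using iC(2) x(1) unfolding invariant_def by blast
  ultimately show "C *v x \<in> weight_space U W {A} (\<lambda>_. \<mu>)" unfolding weight_space_def by blast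
qed

lemma minimal_invariant_eigenvector:
  assumes W: "minimal_invariant S U W" and U: "vec.subspace U" and iU: "\<forall>C\<in>S. invariant C U"
    and comm: "\<And>C w. C \<in> S \<Longrightarrow> w \<in> W \<Longrightarrow> lie_bracket A C *v w \<in> U"
    and A: "A \<in> S" and v: "v \<in> W"
  shows "\<exists>c. A *v v - c *s v \<in> U"
proof -
  have Ws: "vec.subspace W" "U \<subseteq> W" "U \<noteq> W" and iW: "\<forall>C\<in>S. invariant C W"
    using W unfolding minimal_invariant_def by auto
  obtain w \<mu> where w: "w \<in> W" "w \<notin> U" "A *v w - \<mu> *s w \<in> U"
    using eigenvector_mod[OF U Ws bspec[OF iW A]] by blast
  have "weight_space U W {A} (\<lambda>_. \<mu>) = W"
  proof (rule minimal_invariant_weight_space[OF W U])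
    show "\<forall>B\<in>{A}. invariant B U" using iU A by blast
    show "w \<in> weight_space U W {A} (\<lambda>_. \<mu>)" "w \<notin> U" unfolding weight_space_def using w by auto
    show "\<forall>C\<in>S. invariant C (weight_space U W {A} (\<lambda>_. \<mu>))"
    proof
      fix C assume C: "C \<in> S"
      show "invariant C (weight_space U W {A} (\<lambda>_. \<mu>))"
        by (rule eigenspace_mod_invariant[OF U bspec[OF iU C] bspec[OF iW C] comm[OF C]])
    qed
  qed
  then show ?thesis using v unfolding weight_space_def by blast
qed

text \<open>If the derived algebra has a common eigenvector \<open>v\<^sub>0 \<in> W\<close> modulo \<open>U\<close>, with \<open>W\<close> minimal, then by
  Lie's lemma its weight space is all of \<open>W\<close>, and by the trace argument all commutators act
  trivially on \<open>W / U\<close>.\<close>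

lemma minimal_invariant_commutators:
  assumes S: "lie_algebra S" and W: "minimal_invariant S U W" and U: "vec.subspace U"
    and iU: "\<forall>A\<in>S. invariant A U" and v0: "v0 \<in> W" "v0 \<notin> U"
    and lam: "\<forall>B\<in>derived S. B *v v0 - lam B *s v0 \<in> U"
    and A: "A \<in> S" and C: "C \<in> S" and w: "w \<in> W"
  shows "lie_bracket A C *v w \<in> U"
proof -
  have Ws: "vec.subspace W" "U \<subseteq> W" "U \<noteq> W" and iW: "\<forall>A\<in>S. invariant A W"
    using W unfolding minimal_invariant_def by auto
  have IS: "derived S \<subseteq> S" by (rule derived_subset[OF S])
  have "weight_space U W (derived S) lam = W"
  proof (rule minimal_invariant_weight_space[OF W U])
    show "\<forall>B\<in>derived S. invariant B U" using IS iU by blast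
    show "v0 \<in> weight_space U W (derived S) lam" "v0 \<notin> U"
      unfolding weight_space_def using v0 lam by auto
    show "\<forall>A\<in>S. invariant A (weight_space U W (derived S) lam)"
    proof
      fix A assume A: "A \<in> S"
      show "invariant A (weight_space U W (derived S) lam)"
        by (rule weight_space_invariant[OF U Ws(2) bspec[OF iU A] bspec[OF iW A]])
           (use IS iU A in \<open>auto intro: bracket_in_derived\<close>)
    qed
  qed
  then have weight: "\<And>B w. B \<in> derived S \<Longrightarrow> w \<in> W \<Longrightarrow> B *v w - lam B *s w \<in> U"
    unfolding weight_space_def by blast
  have AC: "lie_bracket A C \<in> derived S" using A C by (rule bracket_in_derived)
  have "lam (lie_bracket A C) = 0"
    by (rule commutator_weight_zero_quotient[OF U Ws bspec[OF iU A] bspec[OF iW A]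
          bspec[OF iU C] bspec[OF iW C] weight[OF AC]])
  then show ?thesis using weight[OF AC w] by simp
qed

text \<open>By induction on the derived
  length, the derived algebra has a common eigenvector \<open>v\<^sub>0\<close> in a minimal invariant \<open>W\<close>; the
  commutators then act trivially on \<open>W / U\<close>, so \<open>v\<^sub>0\<close> is an eigenvector of every \<open>A \<in> S\<close>.\<close>

lemma common_eigenvector_mod:
  "lie_algebra S \<Longrightarrow> (derived ^^ k) S = {0} \<Longrightarrow> vec.subspace U \<Longrightarrow> vec.subspace V \<Longrightarrow>
   U \<subseteq> V \<Longrightarrow> U \<noteq> V \<Longrightarrow> (\<forall>A\<in>S. invariant A U \<and> invariant A V) \<Longrightarrow>
   \<exists>v\<in>V. v \<notin> U \<and> (\<forall>A\<in>S. \<exists>c. A *v v - c *s v \<in> U)"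
proof (induction k arbitrary: S V)
  case 0
  then have "S = {0}" by simp
  moreover obtain v where "v \<in> V" "v \<notin> U" using 0 by blast
  ultimately show ?case using vec.subspace_0[OF 0(3)] by (auto intro!: exI[of _ 0])
next
  case (Suc k)
  note S = Suc.prems(1) and U = Suc.prems(3)
  have iU: "\<forall>A\<in>S. invariant A U" and iV: "\<forall>A\<in>S. invariant A V" using Suc.prems(7) by auto
  obtain W where W: "minimal_invariant S U W" and WV: "W \<subseteq> V"
    using minimal_invariant_exists[OF Suc.prems(4-6) iV] by blast
  have Ws: "vec.subspace W" "U \<subseteq> W" "U \<noteq> W" and iW: "\<forall>A\<in>S. invariant A W"
    using W unfolding minimal_invariant_def by auto
  have "(derived ^^ k) (derived S) = (derived ^^ Suc k) S" by (simp only: funpow_Suc_right o_apply)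
  then have Ik: "(derived ^^ k) (derived S) = {0}" using Suc.prems(2) by simp
  have iI: "\<forall>A\<in>derived S. invariant A U \<and> invariant A W" using derived_subset[OF S] iU iW by blast
  have "\<exists>v\<in>W. v \<notin> U \<and> (\<forall>B\<in>derived S. \<exists>c. B *v v - c *s v \<in> U)"
    by (rule Suc.IH[OF lie_algebra_derived[OF S] Ik U Ws iI])
  then obtain v0 where v0: "v0 \<in> W" "v0 \<notin> U" and weights: "\<forall>B\<in>derived S. \<exists>c. B *v v0 - c *s v0 \<in> U"
    by blast
  obtain lam where lam: "\<forall>B\<in>derived S. B *v v0 - lam B *s v0 \<in> U" using bchoice[OF weights] by blast
  note comm = minimal_invariant_commutators[OF S W U iU v0 lam]
  have "\<forall>A\<in>S. \<exists>c. A *v v0 - c *s v0 \<in> U"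
  proof
    fix A assume A: "A \<in> S"
    show "\<exists>c. A *v v0 - c *s v0 \<in> U" by (rule minimal_invariant_eigenvector[OF W U iU comm[OF A] A v0(1)])
  qed
  then show ?case using v0 WV by blast
qed

definition triangular_flag :: "'d::finite cmat set \<Rightarrow> (nat \<Rightarrow> 'd cvec) \<Rightarrow> nat \<Rightarrow> bool" where
  "triangular_flag S vs N \<longleftrightarrow> vec.independent (vs ` {..<N}) \<and> inj_on vs {..<N} \<and>
     (\<forall>A\<in>S. \<forall>j<N. A *v vs j \<in> vec.span (vs ` {..j}))"

lemma triangular_flag_invariant:
  assumes "triangular_flag S vs N" "A \<in> S"
  shows "invariant A (vec.span (vs ` {..<N}))"
proof (rule invariant_span)
  fix x assume "x \<in> vs ` {..<N}"
  then obtain j where j: "j < N" "x = vs j" by blast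
  have "vec.span (vs ` {..j}) \<subseteq> vec.span (vs ` {..<N})" using j by (intro vec.span_mono) auto
  then show "A *v x \<in> vec.span (vs ` {..<N})" using assms j unfolding triangular_flag_def by blast
qed

lemma triangular_flag_extend:
  assumes vs: "triangular_flag S vs N" and v: "v \<notin> vec.span (vs ` {..<N})"
    and eig: "\<forall>A\<in>S. \<exists>c. A *v v - c *s v \<in> vec.span (vs ` {..<N})"
  shows "triangular_flag S (vs(N := v)) (Suc N)"
proof -
  let ?U = "vec.span (vs ` {..<N})" and ?vs = "vs(N := v)"
  have old: "?vs ` {..<N} = vs ` {..<N}" by auto
  have image: "?vs ` {..<Suc N} = insert v (vs ` {..<N})" by (auto simp: lessThan_Suc)
  have vs_def: "vec.independent (vs ` {..<N})" "inj_on vs {..<N}"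
      "\<And>A j. A \<in> S \<Longrightarrow> j < N \<Longrightarrow> A *v vs j \<in> vec.span (vs ` {..j})"
    using vs unfolding triangular_flag_def by auto
  have notin: "v \<notin> vs ` {..<N}"
  proof
    assume "v \<in> vs ` {..<N}"
    then have "v \<in> ?U" by (rule vec.span_base)
    with v show False by simp
  qed
  have "inj_on ?vs {..<N}" using vs_def(2) by (simp add: inj_on_def)
  then have inj: "inj_on ?vs {..<Suc N}"
    unfolding lessThan_Suc inj_on_insert using notin old by simp
  have indep: "vec.independent (?vs ` {..<Suc N})"
    unfolding image by (rule vec.independent_insertI[OF v vs_def(1)])
  have "A *v ?vs j \<in> vec.span (?vs ` {..j})" if A: "A \<in> S" and j: "j < Suc N" for A j
  proof (cases "j = N")
    case False
    then have jN: "j < N" using j by simp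
    then have "?vs ` {..j} = vs ` {..j}" by auto
    then show ?thesis using vs_def(3)[OF A jN] jN by simp
  next
    case True
    obtain c where c: "A *v v - c *s v \<in> ?U" using eig A by blast
    have segment: "?vs ` {..j} = insert v (vs ` {..<N})"
      unfolding True lessThan_Suc_atMost[symmetric] by (rule image)
    have "?U \<subseteq> vec.span (?vs ` {..j})" unfolding segment by (intro vec.span_mono) auto
    then have "A *v v - c *s v \<in> vec.span (?vs ` {..j})" using c by blast
    moreover have "c *s v \<in> vec.span (?vs ` {..j})"
      unfolding segment by (intro vec.span_scale vec.span_base) simp
    ultimately have "(A *v v - c *s v) + c *s v \<in> vec.span (?vs ` {..j})" by (rule vec.span_add)
    then show ?thesis using True by simp
  qed
  then show ?thesis unfolding triangular_flag_def using inj indep by blast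
qed

lemma triangular_flag_exists:
  fixes S :: "'d::finite cmat set"
  assumes S: "lie_algebra S" and solv: "(derived ^^ k) S = {0}"
  shows "N \<le> CARD('d) \<Longrightarrow> \<exists>vs. triangular_flag S vs N"
proof (induction N)
  case 0 then show ?case by (auto simp: triangular_flag_def vec.independent_empty)
next
  case (Suc N)
  then obtain vs where vs: "triangular_flag S vs N" by auto
  let ?U = "vec.span (vs ` {..<N})"
  have "card (vs ` {..<N}) = N" using vs unfolding triangular_flag_def by (simp add: card_image)
  moreover have "vec.independent (vs ` {..<N})" using vs unfolding triangular_flag_def by blast
  ultimately have "vec.dim ?U = N" using vec.dim_span_eq_card_independent by metis
  moreover have "vec.dim (UNIV :: 'd cvec set) = CARD('d)" by (rule vec_dim_card)
  ultimately have "?U \<noteq> UNIV" using Suc.prems by (metis Suc_n_not_le_n)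
  moreover have "\<forall>A\<in>S. invariant A ?U \<and> invariant A UNIV"
    using triangular_flag_invariant[OF vs] unfolding invariant_def by blast
  ultimately obtain v where "v \<notin> ?U" "\<forall>A\<in>S. \<exists>c. A *v v - c *s v \<in> ?U"
    using common_eigenvector_mod[OF S solv vec.subspace_span vec.subspace_UNIV subset_UNIV] by blast
  then show ?case using triangular_flag_extend[OF vs] by blast
qed

section \<open>From a complete flag to an upper triangular basis\<close>

definition ord_index :: "'d::{finite,linorder} \<Rightarrow> nat" where
  "ord_index i = card {j. j < i}"

lemma ord_index_mono: "(i::'d::{finite,linorder}) < i' \<Longrightarrow> ord_index i < ord_index i'"
  unfolding ord_index_def by (rule psubset_card_mono) auto

lemma ord_index_le_iff: "ord_index (i::'d::{finite,linorder}) \<le> ord_index j \<longleftrightarrow> i \<le> j"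
  by (metis leD le_less linorder_le_less_linear ord_index_mono)

lemma ord_index_inj: "inj (ord_index :: 'd::{finite,linorder} \<Rightarrow> nat)"
proof (rule injI)
  fix i j :: 'd assume "ord_index i = ord_index j"
  then show "i = j" using ord_index_mono by (metis linorder_cases less_irrefl)
qed

lemma ord_index_less: "ord_index (i::'d::{finite,linorder}) < CARD('d)"
  unfolding ord_index_def by (rule psubset_card_mono) auto

lemma ord_index_range: "range (ord_index :: 'd::{finite,linorder} \<Rightarrow> nat) = {..<CARD('d)}"
proof -
  have "range (ord_index :: 'd \<Rightarrow> nat) \<subseteq> {..<CARD('d)}" using ord_index_less by auto
  moreover have "card (range (ord_index :: 'd \<Rightarrow> nat)) = CARD('d)" using card_image[OF ord_index_inj] by simp
  ultimately show ?thesis by (simp add: card_subset_eq)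
qed

lemma invertible_independent_columns:
  fixes g :: "'d::finite \<Rightarrow> 'd cvec"
  assumes inj: "inj g" and indep: "vec.independent (range g)"
  shows "invertible (\<chi> a b. g b $ a)"
  unfolding invertible_left_inverse matrix_left_invertible_ker
proof (intro allI impI)
  fix x :: "'d cvec" assume x0: "(\<chi> a b. g b $ a) *v x = 0"
  define c where "c v = x $ (inv g v)" for v
  have "(\<Sum>v\<in>range g. c v *s v) = (\<Sum>b\<in>UNIV. c (g b) *s g b)"
    by (rule sum.reindex[OF inj, unfolded o_def])
  also have "\<dots> = (\<chi> a b. g b $ a) *v x"
    unfolding c_def using inj by (simp add: vec_eq_iff matrix_vector_mult_def mult.commute)
  finally have "(\<Sum>v\<in>range g. c v *s v) = 0" using x0 by simp
  then have "\<forall>v\<in>range g. c v = 0" using indep vec.independent_explicit by blast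
  then show "x = 0" unfolding c_def using inv_f_f[OF inj] by (simp add: vec_eq_iff)
qed

lemma matrix_entry_axis: "(M::'a::comm_semiring_1^'n::finite^'m) $ i $ j = (M *v axis j 1) $ i"
  by (simp add: matrix_vector_mult_def axis_def if_distrib[of "\<lambda>x. _ * x"] cong: if_cong)

lemma span_image_repr:
  assumes "x \<in> vec.span (f ` I)" "finite I"
  shows "\<exists>c. x = (\<Sum>i\<in>I. c i *s f i)"
proof -
  have "x \<in> vec.span ({0} \<union> f ` I)" using assms(1) vec.span_mono[of "f ` I" "{0} \<union> f ` I"] by blast
  then obtain u c where "u \<in> {0}" "x = u + (\<Sum>i\<in>I. c i *s f i)"
    using span_Un_image[OF vec.subspace_single_0, of x f I] assms(2) by blast
  then show ?thesis by auto
qed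

lemma flag_matrix:
  fixes vs :: "nat \<Rightarrow> 'd::{finite,linorder} cvec"
  assumes vs: "triangular_flag S vs CARD('d)"
  shows "invertible (\<chi> a (b::'d). vs (ord_index b) $ a)"
    and "matrix_inv (\<chi> a (b::'d). vs (ord_index b) $ a) *v vs (ord_index b) = axis b 1"
proof -
  define P :: "'d cmat" where "P = (\<chi> a b. vs (ord_index b) $ a)"
  have "inj_on vs (range (ord_index :: 'd \<Rightarrow> nat))"
    using vs ord_index_range unfolding triangular_flag_def by metis
  then have inj: "inj (vs \<circ> (ord_index :: 'd \<Rightarrow> nat))" by (rule comp_inj_on[OF ord_index_inj])
  have "range (vs \<circ> (ord_index :: 'd \<Rightarrow> nat)) = vs ` {..<CARD('d)}"
    using ord_index_range by (metis image_comp)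
  then show P: "invertible (\<chi> a (b::'d). vs (ord_index b) $ a)"
    using invertible_independent_columns[OF inj] vs unfolding triangular_flag_def by simp
  have "matrix_inv P ** P = mat 1"
    using someI_ex[OF P[folded P_def, unfolded invertible_def]] unfolding matrix_inv_def by blast
  moreover have "P *v axis b 1 = vs (ord_index b)"
    unfolding P_def
    by (simp add: vec_eq_iff matrix_vector_mult_def axis_def if_distrib[of "\<lambda>x. _ * x"] cong: if_cong)
  ultimately show "matrix_inv (\<chi> a (b::'d). vs (ord_index b) $ a) *v vs (ord_index b) = axis b 1"
    unfolding P_def by (metis matrix_vector_mul_assoc matrix_vector_mul_lid)
qed

text \<open>Conjugating by that matrix makes every operator of \<open>S\<close> upper triangular: the image of the
  flag vector \<open>ord_index j\<close> only involves flag vectors \<open>ord_index i\<close> with \<open>i \<le> j\<close>.\<close>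

lemma triangular_flag_triangularizable:
  fixes S :: "'d::{finite,linorder} cmat set"
  assumes vs: "triangular_flag S vs CARD('d)"
  shows "triangularizable S"
proof -
  define P :: "'d cmat" where "P = (\<chi> a b. vs (ord_index b) $ a)"
  define ri :: "nat \<Rightarrow> 'd" where "ri = inv ord_index"
  have ord_index_ri: "k < CARD('d) \<Longrightarrow> ord_index (ri k) = k" for k
    unfolding ri_def using f_inv_into_f[of k "ord_index :: 'd \<Rightarrow> nat" UNIV] ord_index_range[where 'd='d]
    by simp
  have Pi_vs: "k < CARD('d) \<Longrightarrow> matrix_inv P *v vs k = axis (ri k) 1" for k
    using flag_matrix(2)[OF vs, of "ri k"] ord_index_ri unfolding P_def by simp
  have "(matrix_inv P ** A ** P) $ i $ j = 0" if A: "A \<in> S" and ji: "j < i" for A i j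
  proof -
    have rj: "ord_index j < CARD('d)" by (rule ord_index_less)
    then have "A *v vs (ord_index j) \<in> vec.span (vs ` {..ord_index j})"
      using vs A unfolding triangular_flag_def by blast
    then obtain c where c: "A *v vs (ord_index j) = (\<Sum>k\<in>{..ord_index j}. c k *s vs k)"
      using span_image_repr by blast
    have "P *v axis j 1 = vs (ord_index j)"
      unfolding P_def
      by (simp add: vec_eq_iff matrix_vector_mult_def axis_def if_distrib[of "\<lambda>x. _ * x"] cong: if_cong)
    then have "(matrix_inv P ** A ** P) $ i $ j = (matrix_inv P *v (A *v vs (ord_index j))) $ i"
      by (simp add: matrix_entry_axis matrix_vector_mul_assoc[symmetric])
    also have "\<dots> = (\<Sum>k\<in>{..ord_index j}. c k * axis (ri k) 1 $ i)"
      using c Pi_vs rj by (simp add: vec.sum vec.scale)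
    also have "\<dots> = 0"
    proof (rule sum.neutral, intro ballI)
      fix k assume "k \<in> {..ord_index j}"
      then have "ri k \<noteq> i" using ord_index_ri[of k] rj ji ord_index_le_iff[of i j] by auto
      then show "c k * axis (ri k) 1 $ i = 0" by (simp add: axis_def)
    qed
    finally show ?thesis .
  qed
  then show ?thesis
    unfolding triangularizable_def upper_triangular_def using flag_matrix(1)[OF vs] P_def by blast
qed

theorem lie_triangularizable:
  assumes "lie_algebra S" "(derived ^^ k) S = {0}"
  shows "triangularizable S"
  using triangular_flag_exists[OF assms order_refl] triangular_flag_triangularizable by blast


lemma Zn_graded_scalar_graded:
  assumes "n \<ge> 1" "Zn_graded n Lk L" "\<forall>A\<in>Lk 0. \<exists>c. A = mat c"
  shows "scalar_graded n Lk"
  using assms unfolding Zn_graded_def by unfold_locales blast+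

lemma (in scalar_graded) graded_subalg_grading:
  assumes L: "lie_algebra L" and sums: "L = {(\<Sum>k<n. x k) | x. \<forall>k<n. x k \<in> Lk k}"
  shows "graded_subalg L"
proof -
  have components: "Lk t \<subseteq> L" if t: "t < n" for t
  proof
    fix y assume y: "y \<in> Lk t"
    define z where "z k = (if k = t then y else 0)" for k
    have "\<forall>k<n. z k \<in> Lk k" using y csubspace_0[OF subspace] unfolding z_def by auto
    moreover have "(\<Sum>k<n. z k) = y" unfolding z_def using t by simp
    ultimately show "y \<in> L" using sums by blast
  qed
  have "\<exists>z. (\<forall>t<n. z t \<in> L \<inter> Lk t) \<and> x = (\<Sum>t<n. z t)" if "x \<in> L" for x
    using that sums components by blast
  then show ?thesis using L unfolding graded_subalg_def by blast
qed

theorem mainTheorem15: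
  fixes L :: "('d::{finite,linorder}) cmat set"
    and Lk :: "nat \<Rightarrow> 'd cmat set"
    and n :: nat
  assumes "n \<ge> 1"
    and "lie_algebra L"
    and "Zn_graded n Lk L"
    and "\<forall>A\<in>Lk 0. \<exists>c. A = mat c"
  shows "solvable L \<and> triangularizable L"
proof -
  interpret scalar_graded n Lk by (rule Zn_graded_scalar_graded[OF assms(1,3,4)])
  have "graded_subalg L"
    using graded_subalg_grading[OF assms(2)] assms(3) unfolding Zn_graded_def by blast
  then have derived_zero: "(derived ^^ (2^(n-1))) L = {0}" by (rule kreknin)
  then have "solvable L" unfolding solvable_def by blast
  moreover have "triangularizable L" by (rule lie_triangularizable[OF assms(2) derived_zero])
  ultimately show ?thesis ..
qed

end
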